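(* Let $E\subset\mathbb{R}$ be an $s$-regular set and $F\subset\mathbb{R}$ be a $t$-regular set, both totally ordered by the order of $\mathbb{R}$, and assume that one of $E,F$ is a standard Cantor set. If $s<t$, there is an order-preserving bi-Lipschitz embedding $\varphi:E\to F$ whose bi-Lipschitz constants depend only on the diameters of $E$ and $F$, their Ahlfors regularity constants, and on $s$ and $t$.
   Context: A compact set $E\subset\mathbb{R}$ is $s$-regular (Ahlfors $s$-regular) if there is a Borel measure $\kappa$ supported on $E$ and constants $0<c\le C$ with $c\,r^s\le\kappa(B(x,r))\le C\,r^s$ for all $x\in E$ and $0<r\le\mathrm{diam}(E)$. A standard Cantor set of dimension $t=\log2/\log p$, $p>2$, is the set obtained from $[0,1]$ by repeatedly cutting each retained closed interval $I$ into consecutive pieces of lengths $|I|/p,(p-2)|I|/p,|I|/p$ and removing the open middle piece. $\varphi$ is order-preserving if $x<y$ implies $\varphi(x)<\varphi(y)$, and bi-Lipschitz if $L^{-1}|x-y|\le|\varphi(x)-\varphi(y)|\le L|x-y|$ for some $L\ge1$. *)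

theory Defs
  imports "HOL-Analysis.Analysis"
begin

definition ahlfors_regular :: "real set \<Rightarrow> real \<Rightarrow> real measure \<Rightarrow> real \<Rightarrow> real \<Rightarrow> bool" where
  "ahlfors_regular E s \<kappa> c C \<longleftrightarrow>
     compact E \<and> sets \<kappa> = sets borel \<and> emeasure \<kappa> (UNIV - E) = 0 \<and>
     0 < c \<and> c \<le> C \<and>
     (\<forall>x\<in>E. \<forall>r. 0 < r \<and> r \<le> diameter E \<longrightarrow>
        ennreal (c * r powr s) \<le> emeasure \<kappa> (cball x r) \<and>
        emeasure \<kappa> (cball x r) \<le> ennreal (C * r powr s))"

text \<open>Retained intervals of the standard Cantor construction with ratio p, as pairs
  (left endpoint, length): each [a, a+l] is replaced by [a, a+l/p] and [a+l-l/p, a+l].\<close>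
fun cantor_level :: "real \<Rightarrow> nat \<Rightarrow> (real \<times> real) set" where
  "cantor_level p 0 = {(0, 1)}"
| "cantor_level p (Suc n) =
     (\<Union>(a, l)\<in>cantor_level p n. {(a, l / p), (a + l - l / p, l / p)})"

definition cantor_set :: "real \<Rightarrow> real set" where
  "cantor_set p = (\<Inter>n. \<Union>(a, l)\<in>cantor_level p n. {a..a + l})"

end

theory Submission
  imports Defs
begin

text \<open>A regular Cantor set of ratio \<open>p\<close> has dimension \<open>log 2 / log p\<close>, i.e. \<open>p powr s = 2\<close>, so the
  dimension determines the Cantor set and one constant serves all admissible pairs.

  If the Cantor set is the domain, a set \<open>F\<close> of larger dimension \<open>t\<close> contains, in every ball
  \<open>cball z r\<close> centred in \<open>F\<close>, at least \<open>2 ^ m\<close> points that are \<open>6 r / p ^ m\<close>-separated (a maximal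
  separated set covers the ball, and lower regularity bounds the number of covering balls).
  Iterating builds a tree in \<open>F\<close>; a point of the Cantor set follows the branches selected by its
  blocks of \<open>m\<close> digits, and the limit is its image.

  If the Cantor set is the target, a set \<open>E\<close> of dimension \<open>s < 1\<close> is uniformly porous, so the
  points of \<open>E\<close> not separated by a gap of length \<open>2 d / q ^ (m k)\<close> form clusters of diameter
  comparable to that length, and by upper regularity each cluster splits into at most \<open>2 ^ m\<close>
  clusters of the next level. Numbering them from left to right gives each point of \<open>E\<close> a digit
  sequence, i.e. a point of the Cantor set.

  In both cases two points that separate at level \<open>k\<close> of one hierarchy separate at level \<open>k\<close> of
  the other, and the distances at level \<open>k\<close> are comparable on both sides.\<close>

definition bilipschitz_on :: "real set \<Rightarrow> (real \<Rightarrow> real) \<Rightarrow> real \<Rightarrow> bool" where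
  "bilipschitz_on E \<phi> L \<longleftrightarrow>
     (\<forall>x\<in>E. \<forall>y\<in>E. \<bar>x - y\<bar> \<le> L * \<bar>\<phi> x - \<phi> y\<bar> \<and> \<bar>\<phi> x - \<phi> y\<bar> \<le> L * \<bar>x - y\<bar>)"

lemma bilipschitz_on_mono: "bilipschitz_on E \<phi> L \<Longrightarrow> L \<le> L' \<Longrightarrow> bilipschitz_on E \<phi> L'"
  unfolding bilipschitz_on_def by (meson abs_ge_zero mult_right_mono order_trans)

definition bilipschitz_embeds :: "real set \<Rightarrow> real set \<Rightarrow> real \<Rightarrow> bool" where
  "bilipschitz_embeds E F L \<longleftrightarrow> (\<exists>\<phi>. \<phi> ` E \<subseteq> F \<and> strict_mono_on E \<phi> \<and> bilipschitz_on E \<phi> L)"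

lemma bilipschitz_embeds_mono: "bilipschitz_embeds E F L \<Longrightarrow> L \<le> L' \<Longrightarrow> bilipschitz_embeds E F L'"
  unfolding bilipschitz_embeds_def using bilipschitz_on_mono by blast

lemma strict_mono_bilipschitz_onI:
  assumes "\<And>x y. x \<in> E \<Longrightarrow> y \<in> E \<Longrightarrow> x < y \<Longrightarrow>
      0 < \<phi> y - \<phi> x \<and> y - x \<le> L * (\<phi> y - \<phi> x) \<and> \<phi> y - \<phi> x \<le> L * (y - x)"
  shows "strict_mono_on E \<phi> \<and> bilipschitz_on E \<phi> L"
proof
  show "strict_mono_on E \<phi>" using assms by (intro strict_mono_onI) force
  show "bilipschitz_on E \<phi> L"
    unfolding bilipschitz_on_def
  proof (intro ballI)
    fix x y assume xy: "x \<in> E" "y \<in> E"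
    consider "x < y" | "y < x" | "x = y" by linarith
    thus "\<bar>x - y\<bar> \<le> L * \<bar>\<phi> x - \<phi> y\<bar> \<and> \<bar>\<phi> x - \<phi> y\<bar> \<le> L * \<bar>x - y\<bar>"
    proof cases
      case 1
      with assms[OF xy 1] show ?thesis by (simp add: abs_minus_commute)
    next
      case 2
      with assms[OF xy(2,1) 2] show ?thesis by simp
    qed simp
  qed
qed

section \<open>Ahlfors regular sets\<close>

locale regular_set =
  fixes E :: "real set" and s :: real and \<kappa> :: "real measure" and c C :: real
  assumes regular: "ahlfors_regular E s \<kappa> c C"
    and diameter_pos: "0 < diameter E"
begin

abbreviation "d \<equiv> diameter E"

lemma compact_set: "compact E"
  and sets_eq [simp]: "sets \<kappa> = sets borel"
  and null_outside: "emeasure \<kappa> (UNIV - E) = 0"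
  and c_pos: "0 < c" and c_le_C: "c \<le> C"
  and lower_bound: "\<And>x r. x \<in> E \<Longrightarrow> 0 < r \<Longrightarrow> r \<le> d \<Longrightarrow> ennreal (c * r powr s) \<le> emeasure \<kappa> (cball x r)"
  and upper_bound_le_diameter:
    "\<And>x r. x \<in> E \<Longrightarrow> 0 < r \<Longrightarrow> r \<le> d \<Longrightarrow> emeasure \<kappa> (cball x r) \<le> ennreal (C * r powr s)"
  using regular unfolding ahlfors_regular_def by auto

lemma C_pos: "0 < C"
  using c_pos c_le_C by simp

lemma closed_set: "closed E"
  using compact_set compact_imp_closed by blast

lemma nonempty: "E \<noteq> {}"
  using diameter_pos by auto

lemma dist_le_diameter: "x \<in> E \<Longrightarrow> y \<in> E \<Longrightarrow> \<bar>x - y\<bar> \<le> d"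
  using diameter_bounded_bound[OF compact_imp_bounded[OF compact_set], of x y] by (simp add: dist_real_def)

lemma emeasure_le_of_cover: 
  assumes "A \<inter> E \<subseteq> B" "B \<in> sets borel"
  shows "emeasure \<kappa> A \<le> emeasure \<kappa> B"
proof -
  have "emeasure \<kappa> A \<le> emeasure \<kappa> (B \<union> (UNIV - E))"
    using assms closed_set by (intro emeasure_mono) auto
  also have "\<dots> \<le> emeasure \<kappa> B + emeasure \<kappa> (UNIV - E)"
    using assms closed_set by (intro emeasure_subadditive) auto
  finally show ?thesis
    using null_outside by simp
qed

lemma emeasure_le_total: "x \<in> E \<Longrightarrow> emeasure \<kappa> A \<le> ennreal (C * d powr s)"
  using emeasure_le_of_cover[of A "cball x d"] upper_bound_le_diameter[of x d] diameter_pos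
    dist_le_diameter by (force simp: dist_real_def)

text \<open>For \<open>s < 0\<close> the lower bound at a small radius would exceed the total mass bound \<open>C d powr s\<close>.\<close>
lemma dimension_nonneg: "0 \<le> s"
proof (rule ccontr)
  assume "\<not> 0 \<le> s"
  hence s: "s < 0" by simp
  obtain x where x: "x \<in> E" using nonempty by auto
  define a where "a = c / (2 * C)"
  define r where "r = d * a powr (-1 / s)"
  have a: "0 < a" "a < 1" using c_pos c_le_C by (auto simp: a_def)
  have "a powr (-1 / s) < 1 powr (-1 / s)" using a s by (intro powr_less_mono2) auto
  hence r: "0 < r" "r \<le> d" using a diameter_pos by (auto simp: r_def)
  have "r powr s = d powr s * a powr (-1)"
    using a s diameter_pos by (simp add: r_def powr_mult powr_powr)
  also have "\<dots> = d powr s * (2 * C / c)"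
    using a c_pos C_pos by (simp add: powr_minus a_def)
  finally have "c * r powr s = 2 * (C * d powr s)" using c_pos by simp
  moreover have "ennreal (c * r powr s) \<le> ennreal (C * d powr s)"
    using lower_bound[OF x r] emeasure_le_total[OF x, of "cball x r"] by simp
  ultimately show False
    using C_pos diameter_pos by (simp add: ennreal_le_iff)
qed

lemma upper_bound:
  assumes x: "x \<in> E" and r: "0 < r"
  shows "emeasure \<kappa> (cball x r) \<le> ennreal (C * r powr s)"
proof (cases "r \<le> d")
  case False
  have "emeasure \<kappa> (cball x r) \<le> ennreal (C * d powr s)"
    using emeasure_le_total[OF x] .
  also have "\<dots> \<le> ennreal (C * r powr s)"
    using False diameter_pos dimension_nonneg C_pos by (intro ennreal_leI mult_left_mono powr_mono2) auto
  finally show ?thesis .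
qed (use upper_bound_le_diameter x r in blast)

lemma packing_bound:
  assumes Y: "finite Y" "Y \<subseteq> E" and x: "x \<in> E" and R: "\<forall>y\<in>Y. \<bar>y - x\<bar> \<le> R"
    and sep: "\<forall>y\<in>Y. \<forall>y'\<in>Y. y \<noteq> y' \<longrightarrow> \<delta> \<le> \<bar>y - y'\<bar>" and \<delta>: "0 < \<delta>" "\<delta> \<le> 3 * d"
  shows "real (card Y) * (c * (\<delta> / 3) powr s) \<le> C * (R + \<delta> / 3) powr s"
proof (cases "Y = {}")
  case False
  then obtain y0 where "y0 \<in> Y" by auto
  hence R0: "0 \<le> R" using R by force
  define B where "B y = cball (y::real) (\<delta> / 3)" for y
  have disj: "disjoint_family_on B Y"
  proof (unfold disjoint_family_on_def, intro ballI impI)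
    fix y y' assume yy: "y \<in> Y" "y' \<in> Y" "y \<noteq> y'"
    show "B y \<inter> B y' = {}"
    proof (rule ccontr)
      assume "B y \<inter> B y' \<noteq> {}"
      hence "\<bar>y - y'\<bar> \<le> 2 * \<delta> / 3"
        unfolding B_def by (auto simp: dist_real_def abs_if split: if_splits)
      thus False using sep yy \<delta> by fastforce
    qed
  qed
  have "(\<Sum>y\<in>Y. ennreal (c * (\<delta> / 3) powr s)) \<le> (\<Sum>y\<in>Y. emeasure \<kappa> (B y))"
    by (intro sum_mono) (use Y \<delta> in \<open>auto simp: B_def intro!: lower_bound\<close>)
  also have "\<dots> = emeasure \<kappa> (\<Union>y\<in>Y. B y)"
    by (rule sum_emeasure[OF _ disj Y(1)]) (auto simp: B_def)
  also have "\<dots> \<le> emeasure \<kappa> (cball x (R + \<delta> / 3))"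
  proof (rule emeasure_mono)
    show "(\<Union>y\<in>Y. B y) \<subseteq> cball x (R + \<delta> / 3)"
    proof
      fix z assume "z \<in> (\<Union>y\<in>Y. B y)"
      then obtain y where "y \<in> Y" "\<bar>y - z\<bar> \<le> \<delta> / 3"
        by (auto simp: B_def dist_real_def)
      moreover have "\<bar>y - x\<bar> \<le> R" using R \<open>y \<in> Y\<close> by blast
      ultimately have "\<bar>x - z\<bar> \<le> R + \<delta> / 3" by arith
      thus "z \<in> cball x (R + \<delta> / 3)" by (simp add: dist_real_def)
    qed
  qed simp
  also have "\<dots> \<le> ennreal (C * (R + \<delta> / 3) powr s)"
    using R0 \<delta> by (intro upper_bound x) simp
  finally have "ennreal (real (card Y) * (c * (\<delta> / 3) powr s)) \<le> ennreal (C * (R + \<delta> / 3) powr s)"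
    using c_pos by (simp add: ennreal_mult ennreal_of_nat_eq_real_of_nat)
  then show ?thesis
    using C_pos by (subst (asm) ennreal_le_iff) auto
qed (use C_pos in simp)

lemma covering_bound:
  assumes I: "finite I" "y ` I \<subseteq> E" and cover: "A \<inter> E \<subseteq> (\<Union>i\<in>I. cball (y i) r)" and r: "0 < r"
  shows "emeasure \<kappa> A \<le> ennreal (real (card I) * (C * r powr s))"
proof -
  have "emeasure \<kappa> A \<le> emeasure \<kappa> (\<Union>i\<in>I. cball (y i) r)"
    using I by (intro emeasure_le_of_cover[OF cover] sets.finite_UN) auto
  also have "\<dots> \<le> (\<Sum>i\<in>I. emeasure \<kappa> (cball (y i) r))"
    using I by (intro emeasure_subadditive_finite) auto
  also have "\<dots> \<le> (\<Sum>i\<in>I. ennreal (C * r powr s))"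
    using I r by (intro sum_mono upper_bound) auto
  also have "\<dots> = ennreal (real (card I) * (C * r powr s))"
    using C_pos by (simp add: ennreal_mult ennreal_of_nat_eq_real_of_nat)
  finally show ?thesis .
qed

end

section \<open>Digit expansions of the Cantor set\<close>

definition cantor_term :: "real \<Rightarrow> (nat \<Rightarrow> bool) \<Rightarrow> nat \<Rightarrow> real" where
  "cantor_term p b j = (if b j then (p - 1) / p ^ Suc j else 0)"

definition cantor_point :: "real \<Rightarrow> (nat \<Rightarrow> bool) \<Rightarrow> real" where
  "cantor_point p b = (\<Sum>j. cantor_term p b j)"

lemma cantor_weight_tail_sums:
  fixes p :: real
  assumes p: "1 < p"
  shows "(\<lambda>j. (p - 1) / p ^ Suc (j + k)) sums (1 / p ^ k)"
proof -
  have "(\<lambda>j. (1 / p) ^ j) sums (1 / (1 - 1 / p))"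
    using p by (intro geometric_sums) auto
  hence "(\<lambda>j. (p - 1) / p ^ Suc k * (1 / p) ^ j) sums ((p - 1) / p ^ Suc k * (1 / (1 - 1 / p)))"
    by (rule sums_mult)
  moreover have "(p - 1) / p ^ Suc k * (1 / (1 - 1 / p)) = 1 / p ^ k"
    using p by (simp add: field_simps)
  ultimately show ?thesis
    by (simp add: power_add power_divide field_simps)
qed

lemma cantor_term_nonneg: "1 < p \<Longrightarrow> 0 \<le> cantor_term p b j"
  by (simp add: cantor_term_def)

lemma cantor_term_le: "1 < p \<Longrightarrow> cantor_term p b j \<le> (p - 1) / p ^ Suc j"
  by (simp add: cantor_term_def)

lemma summable_cantor_term:
  assumes p: "1 < p"
  shows "summable (\<lambda>j. cantor_term p b (j + k))"
proof (rule summable_comparison_test)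
  show "\<exists>N. \<forall>n\<ge>N. norm (cantor_term p b (n + k)) \<le> (p - 1) / p ^ Suc (n + k)"
    using cantor_term_le[OF p] cantor_term_nonneg[OF p] by auto
qed (rule sums_summable[OF cantor_weight_tail_sums[OF p]])

lemma cantor_term_tail_bounds:
  assumes p: "1 < p"
  shows "0 \<le> (\<Sum>j. cantor_term p b (j + k))" "(\<Sum>j. cantor_term p b (j + k)) \<le> 1 / p ^ k"
proof -
  show "0 \<le> (\<Sum>j. cantor_term p b (j + k))"
    using p by (intro suminf_nonneg summable_cantor_term cantor_term_nonneg)
  have "(\<Sum>j. cantor_term p b (j + k)) \<le> (\<Sum>j. (p - 1) / p ^ Suc (j + k))"
    using p by (intro suminf_le cantor_term_le summable_cantor_term
        sums_summable[OF cantor_weight_tail_sums])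
  also have "\<dots> = 1 / p ^ k"
    using cantor_weight_tail_sums[OF p] by (simp add: sums_iff)
  finally show "(\<Sum>j. cantor_term p b (j + k)) \<le> 1 / p ^ k" .
qed

lemma cantor_point_split:
  "1 < p \<Longrightarrow> cantor_point p b = (\<Sum>i<k. cantor_term p b i) + (\<Sum>j. cantor_term p b (j + k))"
  unfolding cantor_point_def
  using suminf_split_initial_segment[OF summable_cantor_term[of p b 0], of k] by simp

lemma cantor_point_bounds: "1 < p \<Longrightarrow> 0 \<le> cantor_point p b \<and> cantor_point p b \<le> 1"
  using cantor_term_tail_bounds[of p b 0] by (simp add: cantor_point_def)

lemma cantor_point_shift:
  assumes p: "1 < p"
  shows "cantor_point p b = (if b 0 then (p - 1) / p else 0) + cantor_point p (\<lambda>j. b (Suc j)) / p"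
proof -
  have "(\<lambda>j. cantor_term p b (j + 1)) = (\<lambda>j. cantor_term p (\<lambda>j. b (Suc j)) j / p)"
    by (simp add: cantor_term_def fun_eq_iff)
  hence "cantor_point p b = cantor_term p b 0 + (\<Sum>j. cantor_term p (\<lambda>j. b (Suc j)) j / p)"
    using cantor_point_split[OF p, of b 1] by simp
  also have "(\<Sum>j. cantor_term p (\<lambda>j. b (Suc j)) j / p) = cantor_point p (\<lambda>j. b (Suc j)) / p"
    unfolding cantor_point_def using summable_cantor_term[OF p, of _ 0] by (intro suminf_divide) simp
  finally show ?thesis by (simp add: cantor_term_def)
qed

lemma cantor_point_gap:
  assumes p: "2 < p" and eq: "\<forall>i<j. b i = b' i" and b: "\<not> b j" "b' j"
  shows "(p - 2) / p ^ Suc j \<le> cantor_point p b' - cantor_point p b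
    \<and> cantor_point p b' - cantor_point p b \<le> 1 / p ^ j"
proof -
  have p1: "1 < p" using p by simp
  have "(\<Sum>i<j. cantor_term p b' i) = (\<Sum>i<j. cantor_term p b i)"
    using eq by (intro sum.cong) (auto simp: cantor_term_def)
  hence "(\<Sum>i<Suc j. cantor_term p b' i) - (\<Sum>i<Suc j. cantor_term p b i) = (p - 1) / p ^ Suc j"
    using b by (simp add: cantor_term_def)
  moreover note cantor_term_tail_bounds[OF p1, of b "Suc j"] cantor_term_tail_bounds[OF p1, of b' "Suc j"]
  moreover have "cantor_point p b' - cantor_point p b
      = ((\<Sum>i<Suc j. cantor_term p b' i) - (\<Sum>i<Suc j. cantor_term p b i))
        + ((\<Sum>i. cantor_term p b' (i + Suc j)) - (\<Sum>i. cantor_term p b (i + Suc j)))"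
    using cantor_point_split[OF p1, of b "Suc j"] cantor_point_split[OF p1, of b' "Suc j"] by simp
  moreover have "(p - 1) / p ^ Suc j - 1 / p ^ Suc j = (p - 2) / p ^ Suc j"
    by (simp add: diff_divide_distrib)
  moreover have "(p - 1) / p ^ Suc j + 1 / p ^ Suc j = 1 / p ^ j"
    using p by (simp add: field_simps)
  ultimately show ?thesis by linarith
qed

lemma first_difference:
  assumes "b \<noteq> (b' :: nat \<Rightarrow> bool)"
  obtains j where "\<forall>i<j. b i = b' i" "b j \<noteq> b' j"
proof
  have "\<exists>j. b j \<noteq> b' j" using assms by auto
  thus "b (LEAST j. b j \<noteq> b' j) \<noteq> b' (LEAST j. b j \<noteq> b' j)" by (rule LeastI_ex)
  show "\<forall>i<(LEAST j. b j \<noteq> b' j). b i = b' i"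
    using not_less_Least by blast
qed

lemma cantor_point_less_first_difference:
  assumes p: "2 < p" and less: "cantor_point p b < cantor_point p b'"
  obtains j where "\<forall>i<j. b i = b' i" "\<not> b j" "b' j"
proof -
  have "b \<noteq> b'" using less by auto
  then obtain j where j: "\<forall>i<j. b i = b' i" "b j \<noteq> b' j"
    by (rule first_difference)
  have "\<not> b j"
  proof
    assume "b j"
    hence "(p - 2) / p ^ Suc j \<le> cantor_point p b - cantor_point p b'"
      using cantor_point_gap[OF p, of j b' b] j by auto
    moreover have "0 < (p - 2) / p ^ Suc j" using p by simp
    ultimately show False using less by simp
  qed
  thus ?thesis using j that by auto
qed

definition cantor_children :: "real \<Rightarrow> real \<times> real \<Rightarrow> (real \<times> real) set" where
  "cantor_children p = (\<lambda>(a, l). {(a, l / p), (a + l - l / p, l / p)})"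

definition cantor_left :: "real \<Rightarrow> real \<times> real \<Rightarrow> real \<times> real" where
  "cantor_left p = (\<lambda>(a, l). (a / p, l / p))"

definition cantor_right :: "real \<Rightarrow> real \<times> real \<Rightarrow> real \<times> real" where
  "cantor_right p = (\<lambda>(a, l). (a / p + 1 - 1 / p, l / p))"

lemma cantor_level_Suc_children: "cantor_level p (Suc n) = \<Union>(cantor_children p ` cantor_level p n)"
  by (simp add: cantor_children_def)

lemma cantor_level_Suc_halves:
  assumes "p \<noteq> 0"
  shows "cantor_level p (Suc n) = cantor_left p ` cantor_level p n \<union> cantor_right p ` cantor_level p n"
proof (induction n)
  case 0
  show ?case using assms by (auto simp: cantor_left_def cantor_right_def)
next
  case (Suc n)
  have left: "cantor_children p (cantor_left p x) = cantor_left p ` cantor_children p x" for x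
    using assms by (cases x) (auto simp: cantor_children_def cantor_left_def field_simps)
  have right: "cantor_children p (cantor_right p x) = cantor_right p ` cantor_children p x" for x
    using assms by (cases x) (auto simp: cantor_children_def cantor_right_def field_simps)
  have "cantor_level p (Suc (Suc n))
      = \<Union>(cantor_children p ` (cantor_left p ` cantor_level p n \<union> cantor_right p ` cantor_level p n))"
    by (simp only: cantor_level_Suc_children[of p "Suc n"] Suc.IH)
  also have "\<dots> = cantor_left p ` \<Union>(cantor_children p ` cantor_level p n)
      \<union> cantor_right p ` \<Union>(cantor_children p ` cantor_level p n)"
    by (simp add: image_Un image_image left right image_UN)
  finally show ?case
    by (simp only: cantor_level_Suc_children)
qed

lemma cantor_level_interval:
  assumes p: "1 < p"
  shows "(a, l) \<in> cantor_level p n \<Longrightarrow> l = 1 / p ^ n \<and> 0 \<le> a \<and> a + l \<le> 1"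
proof (induction n arbitrary: a l)
  case (Suc n)
  then obtain a0 l0 where al0: "(a0, l0) \<in> cantor_level p n" "(a, l) \<in> cantor_children p (a0, l0)"
    unfolding cantor_level_Suc_children by auto
  have ih: "l0 = 1 / p ^ n" "0 \<le> a0" "a0 + l0 \<le> 1" using Suc.IH[OF al0(1)] by auto
  have "l0 / p \<le> l0" "0 \<le> l0 / p" using ih p by (auto simp: divide_le_eq)
  then show ?case using al0(2) ih by (auto simp: cantor_children_def)
qed simp

lemma finite_cantor_level: "finite (cantor_level p n)"
  by (induction n) (auto simp: cantor_level_Suc_children cantor_children_def)

lemma card_cantor_level_le: "card (cantor_level p n) \<le> 2 ^ n"
proof (induction n)
  case (Suc n)
  have "card (cantor_level p (Suc n)) \<le> (\<Sum>x\<in>cantor_level p n. card (cantor_children p x))"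
    unfolding cantor_level_Suc_children by (rule card_UN_le[OF finite_cantor_level])
  also have "\<dots> \<le> (\<Sum>x\<in>cantor_level p n. 2)"
    by (intro sum_mono) (auto simp: cantor_children_def card_insert_if)
  finally show ?case using Suc.IH by simp
qed simp

lemma mem_cantor_set_iff:
  "x \<in> cantor_set p \<longleftrightarrow> (\<forall>n. \<exists>(a, l)\<in>cantor_level p n. a \<le> x \<and> x \<le> a + l)"
  unfolding cantor_set_def by (auto split: prod.splits)

lemma cantor_set_subset_unit: "x \<in> cantor_set p \<Longrightarrow> 0 \<le> x \<and> x \<le> 1"
  unfolding mem_cantor_set_iff by (drule spec[of _ 0]) auto

lemma cantor_point_in_cantor_set:
  assumes p: "2 < p"
  shows "cantor_point p b \<in> cantor_set p"
proof -
  have p0: "p \<noteq> 0" "1 < p" using p by auto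
  have "\<forall>b. \<exists>(a, l)\<in>cantor_level p n. a \<le> cantor_point p b \<and> cantor_point p b \<le> a + l" for n
  proof (induction n)
    case 0
    then show ?case using cantor_point_bounds[OF p0(2)] by auto
  next
    case (Suc n)
    show ?case
    proof
      fix b
      obtain a l where al: "(a, l) \<in> cantor_level p n"
          "a \<le> cantor_point p (\<lambda>j. b (Suc j))" "cantor_point p (\<lambda>j. b (Suc j)) \<le> a + l"
        using spec[OF Suc.IH, of "\<lambda>j. b (Suc j)"] by auto
      hence scaled: "a / p \<le> cantor_point p (\<lambda>j. b (Suc j)) / p"
          "cantor_point p (\<lambda>j. b (Suc j)) / p \<le> a / p + l / p"
        using p0 by (auto simp: divide_right_mono add_divide_distrib[symmetric])
      have left: "cantor_left p (a, l) \<in> cantor_level p (Suc n)"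
        and right: "cantor_right p (a, l) \<in> cantor_level p (Suc n)"
        using al(1) cantor_level_Suc_halves[OF p0(1)] by auto
      have "(p - 1) / p = 1 - 1 / p" using p0 by (simp add: field_simps)
      then show "\<exists>(a, l)\<in>cantor_level p (Suc n). a \<le> cantor_point p b \<and> cantor_point p b \<le> a + l"
      proof (cases "b 0")
        case True
        then show ?thesis
          using cantor_point_shift[OF p0(2), of b] scaled \<open>(p - 1) / p = 1 - 1 / p\<close>
          by (intro bexI[OF _ right]) (simp add: cantor_right_def)
      next
        case False
        then show ?thesis
          using cantor_point_shift[OF p0(2), of b] scaled
          by (intro bexI[OF _ left]) (simp add: cantor_left_def)
      qed
    qed
  qed
  thus ?thesis by (simp add: mem_cantor_set_iff)
qed

text \<open>\<open>bin_digit m n\<close> lists the \<open>m\<close> binary digits of \<open>n < 2 ^ m\<close>, most significant first, and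
  \<open>bin_value m\<close> reads such a digit string back; hence both respect the lexicographic order.\<close>
fun bin_digit :: "nat \<Rightarrow> nat \<Rightarrow> nat \<Rightarrow> bool" where
  "bin_digit 0 n i = False"
| "bin_digit (Suc m) n 0 = (2 ^ m \<le> n)"
| "bin_digit (Suc m) n (Suc i) = bin_digit m (n mod 2 ^ m) i"

fun bin_value :: "nat \<Rightarrow> (nat \<Rightarrow> bool) \<Rightarrow> nat" where
  "bin_value 0 f = 0"
| "bin_value (Suc m) f = (if f 0 then 2 ^ m else 0) + bin_value m (\<lambda>i. f (Suc i))"

lemma bin_digit_first_difference:
  "n < n' \<Longrightarrow> n' < 2 ^ m \<Longrightarrow>
    \<exists>i<m. (\<forall>j<i. bin_digit m n j = bin_digit m n' j) \<and> \<not> bin_digit m n i \<and> bin_digit m n' i"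
proof (induction m arbitrary: n n')
  case (Suc m)
  have shift: "\<exists>i<Suc m. (\<forall>j<i. bin_digit (Suc m) n j = bin_digit (Suc m) n' j)
      \<and> \<not> bin_digit (Suc m) n i \<and> bin_digit (Suc m) n' i"
    if same_head: "2 ^ m \<le> n \<longleftrightarrow> 2 ^ m \<le> n'" and less: "n mod 2 ^ m < n' mod 2 ^ m"
  proof -
    obtain i where i: "i < m" "\<forall>j<i. bin_digit m (n mod 2 ^ m) j = bin_digit m (n' mod 2 ^ m) j"
        "\<not> bin_digit m (n mod 2 ^ m) i" "bin_digit m (n' mod 2 ^ m) i"
      using Suc.IH[OF less] by auto
    have "\<forall>j<Suc i. bin_digit (Suc m) n j = bin_digit (Suc m) n' j"
      using i(2) same_head by (auto simp: less_Suc_eq_0_disj)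
    thus ?thesis using i by (intro exI[of _ "Suc i"]) auto
  qed
  consider "n' < 2 ^ m" | "2 ^ m \<le> n" | "n < 2 ^ m" "2 ^ m \<le> n'" by linarith
  then show ?case
  proof cases
    case 1
    thus ?thesis using Suc.prems by (intro shift) auto
  next
    case 2
    thus ?thesis using Suc.prems by (intro shift) (auto simp: le_mod_geq)
  qed auto
qed simp

lemma bin_value_less: "bin_value m f < 2 ^ m"
proof (induction m arbitrary: f)
  case (Suc m)
  have "bin_value m (\<lambda>i. f (Suc i)) < 2 ^ m" by (rule Suc.IH)
  then show ?case by simp
qed simp

lemma bin_value_less_first_difference:
  "i < m \<Longrightarrow> \<forall>j<i. f j = f' j \<Longrightarrow> \<not> f i \<Longrightarrow> f' i \<Longrightarrow> bin_value m f < bin_value m f'"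
proof (induction m arbitrary: f f' i)
  case (Suc m)
  show ?case
  proof (cases i)
    case 0
    then show ?thesis using Suc.prems bin_value_less[of m "\<lambda>i. f (Suc i)"] by simp
  next
    case (Suc i')
    then have "bin_value m (\<lambda>i. f (Suc i)) < bin_value m (\<lambda>i. f' (Suc i))"
      using Suc.IH[of i' "\<lambda>i. f (Suc i)" "\<lambda>i. f' (Suc i)"] Suc.prems by auto
    moreover have "f 0 = f' 0" using Suc.prems Suc by auto
    ultimately show ?thesis by simp
  qed
qed simp

lemma bin_value_cong: "(\<forall>i<m. f i = g i) \<Longrightarrow> bin_value m f = bin_value m g"
  by (induction m arbitrary: f g) auto

lemma power_block_bounds:
  fixes p :: real
  assumes "1 \<le> p" "m * K \<le> j" "j < m * Suc K"
  shows "p ^ (m * K) \<le> p ^ j" "p ^ Suc j \<le> p ^ (m * Suc K)"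
proof -
  show "p ^ (m * K) \<le> p ^ j" using assms(2,1) by (rule power_increasing)
  have "Suc j \<le> m * Suc K" using assms(3) by simp
  thus "p ^ Suc j \<le> p ^ (m * Suc K)" using assms(1) by (rule power_increasing)
qed

lemma cantor_level_Suc_cases:
  assumes p: "2 < p" and I: "(a', l') \<in> cantor_level p (Suc n)" "a' \<le> x" "x \<le> a' + l'"
  shows "(x \<le> 1 / p \<and> (\<exists>(a, l)\<in>cantor_level p n. a \<le> p * x \<and> p * x \<le> a + l))
    \<or> (1 - 1 / p \<le> x \<and> (\<exists>(a, l)\<in>cantor_level p n. a \<le> p * x - (p - 1) \<and> p * x - (p - 1) \<le> a + l))"
proof -
  have p0: "p \<noteq> 0" "1 < p" using p by auto
  from I(1) obtain a l where al: "(a, l) \<in> cantor_level p n"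
    and "(a', l') = cantor_left p (a, l) \<or> (a', l') = cantor_right p (a, l)"
    unfolding cantor_level_Suc_halves[OF p0(1)] by auto
  hence a': "a' = a / p \<or> a' = a / p + 1 - 1 / p" and l': "l' = l / p"
    by (auto simp: cantor_left_def cantor_right_def)
  have "0 \<le> a / p" "(a + l) / p \<le> 1 / p"
    using cantor_level_interval[OF p0(2) al] p0 by (auto intro: divide_right_mono)
  hence bounds: "0 \<le> a / p" "a / p + l / p \<le> 1 / p"
    by (simp_all add: add_divide_distrib)
  have scale: "a / p \<le> y \<and> y \<le> a / p + l / p \<longleftrightarrow> a \<le> p * y \<and> p * y \<le> a + l" for y
    using p0 by (auto simp: field_simps)
  from a' show ?thesis
  proof
    assume "a' = a / p"
    hence "x \<le> 1 / p" "a \<le> p * x \<and> p * x \<le> a + l"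
      using I(2,3) l' bounds scale[of x] by auto
    thus ?thesis using al by blast
  next
    assume "a' = a / p + 1 - 1 / p"
    hence "1 - 1 / p \<le> x" "a \<le> p * (x - (1 - 1 / p)) \<and> p * (x - (1 - 1 / p)) \<le> a + l"
      using I(2,3) l' bounds scale[of "x - (1 - 1 / p)"] by auto
    moreover have "p * (x - (1 - 1 / p)) = p * x - (p - 1)"
      using p0 by (simp add: field_simps)
    ultimately show ?thesis using al by auto
  qed
qed

lemma cantor_set_scale:
  assumes p: "2 < p" and x: "x \<in> cantor_set p"
  shows "x \<le> 1 / p \<Longrightarrow> p * x \<in> cantor_set p"
    and "\<not> x \<le> 1 / p \<Longrightarrow> p * x - (p - 1) \<in> cantor_set p"
proof -
  have gap: "1 / p < 1 - 1 / p" using p by (simp add: field_simps)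
  have cases: "(x \<le> 1 / p \<and> (\<exists>(a, l)\<in>cantor_level p n. a \<le> p * x \<and> p * x \<le> a + l))
    \<or> (1 - 1 / p \<le> x \<and> (\<exists>(a, l)\<in>cantor_level p n. a \<le> p * x - (p - 1) \<and> p * x - (p - 1) \<le> a + l))" for n
  proof -
    have "\<exists>(a', l')\<in>cantor_level p (Suc n). a' \<le> x \<and> x \<le> a' + l'"
      using x unfolding mem_cantor_set_iff ..
    then obtain a' l' where "(a', l') \<in> cantor_level p (Suc n)" "a' \<le> x" "x \<le> a' + l'"
      by auto
    thus ?thesis by (rule cantor_level_Suc_cases[OF p])
  qed
  show "p * x \<in> cantor_set p" if "x \<le> 1 / p"
    unfolding mem_cantor_set_iff
  proof
    fix n
    have "\<not> 1 - 1 / p \<le> x" using that gap by linarith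
    thus "\<exists>(a, l)\<in>cantor_level p n. a \<le> p * x \<and> p * x \<le> a + l"
      using cases[of n] by (simp only: simp_thms)
  qed
  show "p * x - (p - 1) \<in> cantor_set p" if "\<not> x \<le> 1 / p"
    unfolding mem_cantor_set_iff
  proof
    fix n show "\<exists>(a, l)\<in>cantor_level p n. a \<le> p * x - (p - 1) \<and> p * x - (p - 1) \<le> a + l"
      using cases[of n] that by (simp only: simp_thms)
  qed
qed

definition cantor_expand :: "real \<Rightarrow> real \<Rightarrow> real" where
  "cantor_expand p y = (if y \<le> 1 / p then p * y else p * y - (p - 1))"

definition cantor_digits :: "real \<Rightarrow> real \<Rightarrow> nat \<Rightarrow> bool" where
  "cantor_digits p x j \<longleftrightarrow> 1 / p < (cantor_expand p ^^ j) x"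

lemma cantor_expand_iterate:
  assumes p: "2 < p" and x: "x \<in> cantor_set p"
  shows "(cantor_expand p ^^ j) x \<in> cantor_set p
    \<and> x = (\<Sum>i<j. cantor_term p (cantor_digits p x) i) + (cantor_expand p ^^ j) x / p ^ j"
proof (induction j)
  case (Suc j)
  define y where "y = (cantor_expand p ^^ j) x"
  have y: "y \<in> cantor_set p" "x = (\<Sum>i<j. cantor_term p (cantor_digits p x) i) + y / p ^ j"
    using Suc.IH by (auto simp: y_def)
  have step: "(cantor_expand p ^^ Suc j) x = cantor_expand p y"
    by (simp add: y_def)
  let ?S = "\<lambda>j. \<Sum>i<j. cantor_term p (cantor_digits p x) i"
  show ?case
  proof (cases "y \<le> 1 / p")
    case True
    have expand: "cantor_expand p y = p * y" using True by (simp add: cantor_expand_def)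
    have "?S (Suc j) = ?S j"
      using True by (simp add: cantor_term_def cantor_digits_def y_def)
    moreover have "p * y / p ^ Suc j = y / p ^ j" using p by simp
    ultimately have "x = ?S (Suc j) + p * y / p ^ Suc j" using y(2) by linarith
    with cantor_set_scale(1)[OF p y(1) True] show ?thesis
      unfolding step expand by (rule conjI)
  next
    case False
    have expand: "cantor_expand p y = p * y - (p - 1)" using False by (simp add: cantor_expand_def)
    have "?S (Suc j) = ?S j + (p - 1) / p ^ Suc j"
      using False by (simp add: cantor_term_def cantor_digits_def y_def)
    moreover have "(p * y - (p - 1)) / p ^ Suc j = y / p ^ j - (p - 1) / p ^ Suc j"
      using p by (simp add: diff_divide_distrib)
    ultimately have "x = ?S (Suc j) + (p * y - (p - 1)) / p ^ Suc j" using y(2) by linarith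
    with cantor_set_scale(2)[OF p y(1) False] show ?thesis
      unfolding step expand by (rule conjI)
  qed
qed (use x in simp)

lemma cantor_point_cantor_digits:
  assumes p: "2 < p" and x: "x \<in> cantor_set p"
  shows "cantor_point p (cantor_digits p x) = x"
proof -
  have "norm ((\<Sum>i<j. cantor_term p (cantor_digits p x) i) - x) \<le> 1 / p ^ j" for j
  proof -
    have "0 \<le> (cantor_expand p ^^ j) x \<and> (cantor_expand p ^^ j) x \<le> 1"
      using cantor_expand_iterate[OF p x] cantor_set_subset_unit by blast
    hence "0 \<le> (cantor_expand p ^^ j) x / p ^ j \<and> (cantor_expand p ^^ j) x / p ^ j \<le> 1 / p ^ j"
      using p by (auto intro: divide_right_mono)
    thus ?thesis using cantor_expand_iterate[OF p x, of j] unfolding real_norm_def by linarith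
  qed
  hence "\<forall>\<^sub>F j in sequentially. norm ((\<Sum>i<j. cantor_term p (cantor_digits p x) i) - x) \<le> 1 / p ^ j"
    by (intro always_eventually allI)
  moreover have "(\<lambda>j. (1 / p) ^ j) \<longlonglongrightarrow> 0"
    using p by (intro LIMSEQ_power_zero) auto
  hence "(\<lambda>j. 1 / p ^ j) \<longlonglongrightarrow> 0"
    by (simp add: power_divide)
  ultimately have "(\<lambda>j. (\<Sum>i<j. cantor_term p (cantor_digits p x) i) - x) \<longlonglongrightarrow> 0"
    by (rule Lim_null_comparison)
  hence "cantor_term p (cantor_digits p x) sums x"
    by (simp add: sums_def LIM_zero_iff)
  thus ?thesis
    by (simp add: cantor_point_def sums_iff)
qed

section \<open>The dimension of a regular Cantor set\<close>

lemma power_powr_commute: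
  fixes p t :: real
  assumes "0 < p"
  shows "(p ^ k) powr t = (p powr t) ^ k"
  using assms by (simp add: powr_realpow[symmetric] powr_powr powr_power mult.commute)

lemma cantor_point_const:
  assumes p: "1 < p"
  shows "cantor_point p (\<lambda>_. False) = 0" and "cantor_point p (\<lambda>_. True) = 1"
  using cantor_weight_tail_sums[OF p, of 0]
  by (simp_all add: cantor_point_def cantor_term_def sums_iff)

lemma diameter_cantor_set:
  assumes p: "2 < p"
  shows "diameter (cantor_set p) = 1"
proof (rule antisym)
  show "diameter (cantor_set p) \<le> 1"
  proof (rule diameter_le)
    fix x y assume "x \<in> cantor_set p" "y \<in> cantor_set p"
    thus "norm (x - y) \<le> 1" using cantor_set_subset_unit[of x p] cantor_set_subset_unit[of y p] by auto
  qed simp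
  have "0 \<in> cantor_set p" "1 \<in> cantor_set p"
    using cantor_point_in_cantor_set[OF p, of "\<lambda>_. False"] cantor_point_in_cantor_set[OF p, of "\<lambda>_. True"]
      cantor_point_const[of p] p by simp_all
  moreover have "bounded (cantor_set p)"
    using cantor_set_subset_unit by (intro boundedI[of _ 1]) force
  ultimately show "1 \<le> diameter (cantor_set p)"
    using diameter_bounded_bound[of "cantor_set p" 1 0] by simp
qed

text \<open>The left endpoint of the \<open>n\<close>-th interval of level \<open>k\<close>.\<close>
definition cantor_vertex :: "real \<Rightarrow> nat \<Rightarrow> nat \<Rightarrow> real" where
  "cantor_vertex p k n = cantor_point p (\<lambda>i. i < k \<and> bin_digit k n i)"

lemma cantor_vertex_gap:
  assumes p: "2 < p" and n: "n < n'" "n' < 2 ^ k"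
  shows "(p - 2) / p ^ k \<le> cantor_vertex p k n' - cantor_vertex p k n"
proof -
  obtain i where i: "i < k" "\<forall>j<i. bin_digit k n j = bin_digit k n' j"
      "\<not> bin_digit k n i" "bin_digit k n' i"
    using bin_digit_first_difference[OF n] by blast
  have "(p - 2) / p ^ k \<le> (p - 2) / p ^ Suc i"
    using p i by (intro divide_left_mono power_increasing) auto
  also have "\<dots> \<le> cantor_vertex p k n' - cantor_vertex p k n"
    unfolding cantor_vertex_def using i by (intro conjunct1[OF cantor_point_gap[OF p]]) auto
  finally show ?thesis .
qed

lemma regular_set_cantor_set:
  "2 < p \<Longrightarrow> ahlfors_regular (cantor_set p) s \<mu> c C \<Longrightarrow> regular_set (cantor_set p) s \<mu> c C"
  by unfold_locales (simp_all add: diameter_cantor_set)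

context regular_set
begin

lemma cantor_covering_bound:
  assumes p: "2 < p" and E: "E = cantor_set p"
  shows "c \<le> C * (2 / p powr s) ^ k"
proof -
  have p1: "1 < p" using p by simp
  have d: "d = 1" using diameter_cantor_set[OF p] E by simp
  define L where "L = {I \<in> cantor_level p k. \<exists>z\<in>E. fst I \<le> z \<and> z \<le> fst I + snd I}"
  define point where "point I = (SOME z. z \<in> E \<and> fst I \<le> z \<and> z \<le> fst I + snd I)" for I
  have L: "finite L" "card L \<le> 2 ^ k"
    using finite_cantor_level card_cantor_level_le card_mono[of "cantor_level p k" L]
    by (auto simp: L_def intro: order_trans)
  have point: "point I \<in> E \<and> fst I \<le> point I \<and> point I \<le> fst I + snd I" if "I \<in> L" for I
  proof -
    have "\<exists>z. z \<in> E \<and> fst I \<le> z \<and> z \<le> fst I + snd I" using that by (auto simp: L_def)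
    thus ?thesis unfolding point_def by (rule someI_ex)
  qed
  have cover: "cball 0 1 \<inter> E \<subseteq> (\<Union>I\<in>L. cball (point I) (1 / p ^ k))"
  proof
    fix x assume x: "x \<in> cball 0 1 \<inter> E"
    hence "x \<in> cantor_set p" using E by simp
    hence "\<exists>(a, l)\<in>cantor_level p k. a \<le> x \<and> x \<le> a + l"
      unfolding mem_cantor_set_iff by (rule spec)
    then obtain I where I: "I \<in> cantor_level p k" "fst I \<le> x" "x \<le> fst I + snd I"
      by auto
    hence IL: "I \<in> L" using x by (auto simp: L_def)
    have "snd I = 1 / p ^ k"
      using cantor_level_interval[OF p1, of "fst I" "snd I" k] I(1) by simp
    hence "x \<in> cball (point I) (1 / p ^ k)"
      using point[OF IL] I by (auto simp: dist_real_def)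
    thus "x \<in> (\<Union>I\<in>L. cball (point I) (1 / p ^ k))" using IL by blast
  qed
  have "0 \<in> E"
    using cantor_point_in_cantor_set[OF p, of "\<lambda>_. False"] cantor_point_const(1)[OF p1] E by simp
  hence "ennreal (c * 1 powr s) \<le> emeasure \<kappa> (cball 0 1)"
    using d by (intro lower_bound) auto
  also have "\<dots> \<le> ennreal (real (card L) * (C * (1 / p ^ k) powr s))"
    using point p by (intro covering_bound[OF L(1) _ cover]) auto
  finally have "c \<le> real (card L) * (C * (1 / p ^ k) powr s)"
    using C_pos by (subst (asm) ennreal_le_iff) auto
  also have "\<dots> \<le> 2 ^ k * (C * (1 / p ^ k) powr s)"
    using L(2) C_pos by (intro mult_right_mono) (auto simp flip: of_nat_le_iff)
  also have "\<dots> = C * (2 / p powr s) ^ k"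
    using p by (simp add: powr_divide power_powr_commute power_divide)
  finally show ?thesis .
qed

lemma cantor_packing_bound:
  assumes p: "2 < p" and E: "E = cantor_set p" and k: "1 \<le> k"
  shows "c * ((p - 2) / 3) powr s * (2 / p powr s) ^ k \<le> C * 2 powr s"
proof -
  have p1: "1 < p" using p by simp
  have d: "d = 1" using diameter_cantor_set[OF p] E by simp
  define \<delta> where "\<delta> = (p - 2) / p ^ k"
  define point where "point = cantor_vertex p k"
  have \<delta>: "0 < \<delta>" "\<delta> \<le> 1"
    using p k power_increasing[of 1 k p] by (auto simp: \<delta>_def divide_le_eq)
  have sep: "\<delta> \<le> point n' - point n" if "n < n'" "n' < 2 ^ k" for n n'
    unfolding \<delta>_def point_def using cantor_vertex_gap[OF p that] .
  have sep_abs: "\<delta> \<le> \<bar>point n - point n'\<bar>" if "n \<noteq> n'" "n < 2 ^ k" "n' < 2 ^ k" for n n'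
    using that sep[of n n'] sep[of n' n] by (cases "n < n'") auto
  have inj: "inj_on point {..<2 ^ k}"
  proof (rule inj_onI, rule ccontr)
    fix n n' assume "n \<in> {..<2 ^ k}" "n' \<in> {..<2 ^ k}" "point n = point n'" "n \<noteq> n'"
    thus False using sep_abs[of n n'] \<delta>(1) by simp
  qed
  define Y where "Y = point ` {..<2 ^ k}"
  have "\<forall>y\<in>Y. \<forall>y'\<in>Y. y \<noteq> y' \<longrightarrow> \<delta> \<le> \<bar>y - y'\<bar>"
  proof (intro ballI impI)
    fix y y' assume "y \<in> Y" "y' \<in> Y" "y \<noteq> y'"
    then obtain n n' where "n < 2 ^ k" "n' < 2 ^ k" "y = point n" "y' = point n'" "n \<noteq> n'"
      by (auto simp: Y_def)
    thus "\<delta> \<le> \<bar>y - y'\<bar>" using sep_abs[of n n'] by simp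
  qed
  moreover have "Y \<subseteq> E"
    unfolding Y_def point_def cantor_vertex_def E using cantor_point_in_cantor_set[OF p] by auto
  moreover have "\<forall>y\<in>Y. \<bar>y - 0\<bar> \<le> 1"
    unfolding Y_def point_def cantor_vertex_def using cantor_point_bounds[OF p1] by auto
  moreover have "0 \<in> E"
    using cantor_point_in_cantor_set[OF p, of "\<lambda>_. False"] cantor_point_const(1)[OF p1] E by simp
  ultimately have "real (card Y) * (c * (\<delta> / 3) powr s) \<le> C * (1 + \<delta> / 3) powr s"
    using \<delta> d by (intro packing_bound) (auto simp: Y_def)
  also have "\<dots> \<le> C * 2 powr s"
    using \<delta> C_pos dimension_nonneg by (intro mult_left_mono powr_mono2) auto
  finally have "real (card Y) * (c * (\<delta> / 3) powr s) \<le> C * 2 powr s" .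
  moreover have "(\<delta> / 3) powr s = ((p - 2) / 3) powr s / (p powr s) ^ k"
  proof -
    have "\<delta> / 3 = ((p - 2) / 3) / p ^ k" by (simp add: \<delta>_def)
    also have "\<dots> powr s = ((p - 2) / 3) powr s / (p ^ k) powr s"
      using p by (intro powr_divide)
    finally show ?thesis using p by (simp add: power_powr_commute)
  qed
  moreover have "card Y = 2 ^ k"
    using inj by (simp add: Y_def card_image)
  ultimately show ?thesis
    by (simp add: power_divide field_simps)
qed

end

lemma cantor_set_dimension:
  assumes p: "2 < p" and regular: "ahlfors_regular (cantor_set p) s \<mu> c C"
  shows "p powr s = 2"
proof -
  interpret regular_set "cantor_set p" s \<mu> c C
    by (rule regular_set_cantor_set[OF p regular])
  have "\<not> p powr s < 2"
  proof
    assume "p powr s < 2"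
    hence "1 < 2 / p powr s" using p by simp
    then obtain k where k: "C * 2 powr s / (c * ((p - 2) / 3) powr s) < (2 / p powr s) ^ k"
      using real_arch_pow by blast
    have pos: "0 < c * ((p - 2) / 3) powr s" using c_pos p by simp
    have "C * 2 powr s < c * ((p - 2) / 3) powr s * (2 / p powr s) ^ k"
      using k pos by (simp add: divide_less_eq mult.commute)
    also have "\<dots> \<le> c * ((p - 2) / 3) powr s * (2 / p powr s) ^ max 1 k"
      using pos \<open>1 < 2 / p powr s\<close> by (intro mult_left_mono power_increasing) auto
    finally show False using cantor_packing_bound[OF p refl, of "max 1 k"] by simp
  qed
  moreover have "\<not> 2 < p powr s"
  proof
    assume "2 < p powr s"
    moreover have "0 < p powr s" using p by simp
    ultimately have "2 / p powr s < 1" by (simp add: divide_less_eq)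
    then obtain k where "(2 / p powr s) ^ k < c / C"
      using real_arch_pow_inv[of "c / C" "2 / p powr s"] c_pos C_pos by auto
    thus False using cantor_covering_bound[OF p refl, of k] C_pos by (simp add: field_simps)
  qed
  ultimately show ?thesis by simp
qed

section \<open>Embedding a Cantor set into a regular set of larger dimension\<close>

context regular_set
begin

text \<open>A maximal \<open>\<delta>\<close>-separated subset of \<open>E \<inter> cball z r\<close>; the packing bound makes maximal
  ones exist, and maximality makes them \<open>\<delta>\<close>-dense.\<close>
lemma separated_net_exists:
  assumes z: "z \<in> E" and \<delta>: "0 < \<delta>" "\<delta> \<le> 3 * d"
  obtains Y where "Y \<subseteq> E \<inter> cball z r" "finite Y" "\<forall>y\<in>Y. \<forall>y'\<in>Y. y \<noteq> y' \<longrightarrow> \<delta> \<le> \<bar>y - y'\<bar>"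
    "E \<inter> cball z r \<subseteq> (\<Union>y\<in>Y. cball y \<delta>)"
proof -
  define P where "P Y \<longleftrightarrow> Y \<subseteq> E \<inter> cball z r \<and> finite Y
    \<and> (\<forall>y\<in>Y. \<forall>y'\<in>Y. y \<noteq> y' \<longrightarrow> \<delta> \<le> \<bar>y - y'\<bar>)" for Y
  define B where "B = nat \<lceil>C * (r + \<delta> / 3) powr s / (c * (\<delta> / 3) powr s)\<rceil> + 1"
  have bounded: "card Y < B" if "P Y" for Y
  proof -
    have "real (card Y) * (c * (\<delta> / 3) powr s) \<le> C * (r + \<delta> / 3) powr s"
      using that z \<delta> by (intro packing_bound) (auto simp: P_def dist_real_def abs_minus_commute)
    moreover have "0 < c * (\<delta> / 3) powr s" using c_pos \<delta> by simp
    ultimately have "real (card Y) \<le> C * (r + \<delta> / 3) powr s / (c * (\<delta> / 3) powr s)"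
      by (simp add: le_divide_eq)
    thus ?thesis unfolding B_def by linarith
  qed
  obtain Y where Y: "P Y" and maximal: "\<And>Y'. P Y' \<Longrightarrow> card Y' \<le> card Y"
    using ex_has_greatest_nat[of P "{}" card B] bounded by (force simp: P_def)
  have "E \<inter> cball z r \<subseteq> (\<Union>y\<in>Y. cball y \<delta>)"
  proof
    fix w assume w: "w \<in> E \<inter> cball z r"
    show "w \<in> (\<Union>y\<in>Y. cball y \<delta>)"
    proof (rule ccontr)
      assume far: "w \<notin> (\<Union>y\<in>Y. cball y \<delta>)"
      hence "w \<notin> Y" using \<delta> by force
      moreover have "P (insert w Y)"
        using Y w far unfolding P_def by (auto simp: dist_real_def abs_minus_commute)
      ultimately show False
        using maximal[of "insert w Y"] Y by (simp add: P_def)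
    qed
  qed
  with Y show ?thesis
    unfolding P_def by (intro that[of Y]) auto
qed

end

locale cantor_into_regular = regular_set F t \<mu> c C for F t \<mu> c C +
  fixes p :: real and m :: nat
  assumes p: "2 < p"
    and m: "1 \<le> m" "(C / c) * 6 powr t \<le> (p powr t / 2) ^ m"
begin

text \<open>Each node of the tree at level \<open>k\<close> gets \<open>2 ^ m\<close> children at level \<open>k + 1\<close>, so that one
  tree level corresponds to \<open>m\<close> levels of the Cantor set.\<close>
definition branch_ratio :: real where "branch_ratio = p ^ m"

definition radius :: "nat \<Rightarrow> real" where "radius k = d / branch_ratio ^ k"

lemma branch_ratio_gt_2: "2 < branch_ratio"
  using p m power_increasing[of 1 m p] by (simp add: branch_ratio_def)

lemma radius_pos: "0 < radius k"
  using diameter_pos branch_ratio_gt_2 by (simp add: radius_def)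

lemma radius_le: "radius k \<le> d"
  using diameter_pos branch_ratio_gt_2 one_le_power[of branch_ratio k]
  by (simp add: radius_def divide_le_eq mult_le_cancel_left1)

lemma radius_Suc: "radius (Suc k) = radius k / branch_ratio"
  by (simp add: radius_def field_simps)

lemma many_separated_children:
  assumes z: "z \<in> F" and r: "0 < r" "r \<le> d"
  shows "\<exists>Y. Y \<subseteq> F \<inter> cball z r \<and> finite Y \<and> 2 ^ m \<le> card Y
    \<and> (\<forall>y\<in>Y. \<forall>y'\<in>Y. y \<noteq> y' \<longrightarrow> 6 * r / branch_ratio \<le> \<bar>y - y'\<bar>)"
proof -
  define \<delta> where "\<delta> = 6 * r / branch_ratio"
  have "2 * r \<le> d * branch_ratio"
    using r branch_ratio_gt_2 mult_left_mono[of 2 branch_ratio d] diameter_pos by linarith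
  hence \<delta>: "0 < \<delta>" "\<delta> \<le> 3 * d"
    using r branch_ratio_gt_2 by (auto simp: \<delta>_def divide_le_eq)
  obtain Y where Y: "Y \<subseteq> F \<inter> cball z r" "finite Y"
      "\<forall>y\<in>Y. \<forall>y'\<in>Y. y \<noteq> y' \<longrightarrow> \<delta> \<le> \<bar>y - y'\<bar>" "F \<inter> cball z r \<subseteq> (\<Union>y\<in>Y. cball y \<delta>)"
    using separated_net_exists[OF z \<delta>] .
  have "ennreal (c * r powr t) \<le> emeasure \<mu> (cball z r)"
    by (rule lower_bound[OF z r])
  also have "\<dots> \<le> ennreal (real (card Y) * (C * \<delta> powr t))"
    using Y \<delta> by (intro covering_bound[of Y "\<lambda>y. y"]) auto
  finally have "c * r powr t \<le> real (card Y) * (C * \<delta> powr t)"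
    using C_pos by (subst (asm) ennreal_le_iff) auto
  also have "\<delta> powr t = 6 powr t * r powr t / (p powr t) ^ m"
    using r p by (simp add: \<delta>_def powr_divide powr_mult branch_ratio_def power_powr_commute)
  finally have "c * (p powr t) ^ m \<le> real (card Y) * C * 6 powr t"
    using r p by (simp add: field_simps)
  hence "(p powr t / 2) ^ m * 2 ^ m \<le> real (card Y) * (C / c * 6 powr t)"
    using c_pos by (simp add: power_divide field_simps)
  moreover have "(C / c * 6 powr t) * 2 ^ m \<le> (p powr t / 2) ^ m * 2 ^ m"
    using m(2) by (intro mult_right_mono) auto
  moreover have "0 < C / c * 6 powr t" using c_pos C_pos by simp
  ultimately have "(C / c * 6 powr t) * 2 ^ m \<le> (C / c * 6 powr t) * real (card Y)"
    by (simp add: mult.commute)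
  with \<open>0 < C / c * 6 powr t\<close> have "2 ^ m \<le> real (card Y)"
    by (simp only: mult_le_cancel_left_pos)
  hence "2 ^ m \<le> card Y" by (simp flip: of_nat_le_iff)
  thus ?thesis using Y by (auto simp: \<delta>_def)
qed

definition children :: "real \<Rightarrow> real \<Rightarrow> real set" where
  "children z r = (SOME Y. Y \<subseteq> F \<inter> cball z r \<and> finite Y \<and> 2 ^ m \<le> card Y
    \<and> (\<forall>y\<in>Y. \<forall>y'\<in>Y. y \<noteq> y' \<longrightarrow> 6 * r / branch_ratio \<le> \<bar>y - y'\<bar>))"

definition child :: "real \<Rightarrow> real \<Rightarrow> nat \<Rightarrow> real" where
  "child z r n = sorted_list_of_set (children z r) ! n"

definition root :: real where "root = (SOME z. z \<in> F)"

fun node :: "nat \<Rightarrow> (nat \<Rightarrow> bool) \<Rightarrow> real" where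
  "node 0 b = root"
| "node (Suc k) b = child (node k b) (radius k) (bin_value m (\<lambda>i. b (m * k + i)))"

definition tree_limit :: "(nat \<Rightarrow> bool) \<Rightarrow> real" where
  "tree_limit b = root + (\<Sum>k. node (Suc k) b - node k b)"

lemma root_mem: "root \<in> F"
  using nonempty unfolding root_def by (simp add: some_in_eq)

lemma children:
  assumes "z \<in> F" "0 < r" "r \<le> d"
  shows "children z r \<subseteq> F \<inter> cball z r" "finite (children z r)" "2 ^ m \<le> card (children z r)"
    "\<forall>y\<in>children z r. \<forall>y'\<in>children z r. y \<noteq> y' \<longrightarrow> 6 * r / branch_ratio \<le> \<bar>y - y'\<bar>"
  using someI_ex[OF many_separated_children[OF assms]] unfolding children_def by blast+

lemma child_mem:
  assumes "z \<in> F" "0 < r" "r \<le> d" "n < 2 ^ m"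
  shows "child z r n \<in> F \<and> \<bar>child z r n - z\<bar> \<le> r"
proof -
  have "n < length (sorted_list_of_set (children z r))"
    using children(3)[OF assms(1-3)] assms(4) by simp
  hence "child z r n \<in> children z r"
    unfolding child_def using children(2)[OF assms(1-3)] by (metis nth_mem set_sorted_list_of_set)
  thus ?thesis using children(1)[OF assms(1-3)] by (auto simp: dist_real_def abs_minus_commute)
qed

lemma child_gap:
  assumes "z \<in> F" "0 < r" "r \<le> d" "n < n'" "n' < 2 ^ m"
  shows "6 * r / branch_ratio \<le> child z r n' - child z r n"
proof -
  define xs where "xs = sorted_list_of_set (children z r)"
  have n': "n' < length xs"
    using children(3)[OF assms(1-3)] assms(5) by (simp add: xs_def)
  have less: "xs ! n < xs ! n'"
    using sorted_wrt_nth_less[OF strict_sorted_list_of_set assms(4)] n' by (simp add: xs_def)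
  have "set xs = children z r"
    using children(2)[OF assms(1-3)] by (simp add: xs_def)
  hence "xs ! n \<in> children z r" "xs ! n' \<in> children z r"
    using n' assms(4) by (metis nth_mem order.strict_trans)+
  hence "6 * r / branch_ratio \<le> \<bar>xs ! n' - xs ! n\<bar>"
    using children(4)[OF assms(1-3)] less by force
  thus ?thesis using less by (simp add: child_def xs_def)
qed

lemma node_mem_step: "node k b \<in> F \<and> \<bar>node (Suc k) b - node k b\<bar> \<le> radius k"
proof (induction k)
  case 0
  show ?case using child_mem[OF root_mem radius_pos radius_le bin_value_less] root_mem by simp
next
  case (Suc k)
  have "node (Suc k) b \<in> F"
    using Suc.IH child_mem[OF _ radius_pos radius_le bin_value_less] by simp
  thus ?case using child_mem[OF _ radius_pos radius_le bin_value_less] by simp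
qed

lemma node_cong:
  assumes "\<forall>j<m * K. b j = b' j" "k \<le> K"
  shows "node k b = node k b'"
  using assms(2)
proof (induction k)
  case (Suc k)
  have "m * k + i < m * K" if "i < m" for i
    using that Suc.prems mult_le_mono2[of "Suc k" K m] by simp
  hence "bin_value m (\<lambda>i. b (m * k + i)) = bin_value m (\<lambda>i. b' (m * k + i))"
    using assms(1) by (intro bin_value_cong) simp
  thus ?case using Suc by simp
qed simp

lemma radius_tail_sums: "(\<lambda>k. radius (k + n)) sums (radius n * (branch_ratio / (branch_ratio - 1)))"
proof -
  have "(\<lambda>k. (1 / branch_ratio) ^ k) sums (1 / (1 - 1 / branch_ratio))"
    using branch_ratio_gt_2 by (intro geometric_sums) auto
  hence "(\<lambda>k. radius n * (1 / branch_ratio) ^ k) sums (radius n * (1 / (1 - 1 / branch_ratio)))"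
    by (rule sums_mult)
  moreover have "1 / (1 - 1 / branch_ratio) = branch_ratio / (branch_ratio - 1)"
    using branch_ratio_gt_2 by (simp add: field_simps)
  ultimately show ?thesis
    by (simp add: radius_def power_add power_divide field_simps)
qed

lemma tree_limit_tail: "\<bar>tree_limit b - node n b\<bar> \<le> 2 * radius n"
proof -
  let ?D = "\<lambda>k. node (Suc k) b - node k b"
  have bound: "\<bar>?D k\<bar> \<le> radius k" for k
    using node_mem_step by blast
  have summable: "summable (\<lambda>k. \<bar>?D (k + n)\<bar>)" for n
    by (rule summable_rabs_comparison_test[of _ "\<lambda>k. radius (k + n)"])
      (use bound sums_summable[OF radius_tail_sums] in auto)
  have "(\<Sum>k. ?D k) = (\<Sum>k. ?D (k + n)) + (\<Sum>i<n. ?D i)"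
    using summable_rabs_cancel[OF summable[of 0]] by (intro suminf_split_initial_segment) simp
  moreover have "(\<Sum>i<n. ?D i) = node n b - root"
    using sum_lessThan_telescope[of "\<lambda>k. node k b" n] by simp
  ultimately have "tree_limit b - node n b = (\<Sum>k. ?D (k + n))"
    by (simp add: tree_limit_def)
  also have "\<bar>\<dots>\<bar> \<le> (\<Sum>k. \<bar>?D (k + n)\<bar>)"
    by (rule summable_rabs[OF summable])
  also have "\<dots> \<le> (\<Sum>k. radius (k + n))"
    using bound by (intro suminf_le summable sums_summable[OF radius_tail_sums])
  also have "\<dots> = radius n * (branch_ratio / (branch_ratio - 1))"
    using radius_tail_sums by (simp add: sums_iff)
  also have "\<dots> \<le> radius n * 2"
    using branch_ratio_gt_2 radius_pos[of n] by (intro mult_left_mono) (auto simp: divide_le_eq)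
  finally show ?thesis by simp
qed

lemma tree_limit_mem: "tree_limit b \<in> F"
proof -
  have "(\<lambda>k. (1 / branch_ratio) ^ k) \<longlonglongrightarrow> 0"
    using branch_ratio_gt_2 by (intro LIMSEQ_power_zero) auto
  hence "(\<lambda>k. 2 * d * (1 / branch_ratio) ^ k) \<longlonglongrightarrow> 0"
    by (rule tendsto_mult_right_zero)
  moreover have "(\<lambda>k. 2 * d * (1 / branch_ratio) ^ k) = (\<lambda>k. 2 * radius k)"
    by (simp add: radius_def power_divide fun_eq_iff)
  ultimately have "(\<lambda>k. 2 * radius k) \<longlonglongrightarrow> 0" by simp
  moreover have "\<forall>\<^sub>F k in sequentially. norm (node k b - tree_limit b) \<le> 2 * radius k"
    using tree_limit_tail by (intro always_eventually allI) (simp add: abs_minus_commute)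
  ultimately have "(\<lambda>k. node k b - tree_limit b) \<longlonglongrightarrow> 0"
    by (rule Lim_null_comparison[rotated])
  hence limit: "(\<lambda>k. node k b) \<longlonglongrightarrow> tree_limit b"
    by (simp add: LIM_zero_iff)
  show ?thesis
    using closed_sequentially[OF closed_set _ limit] node_mem_step by blast
qed

text \<open>Sequences that first differ at digit \<open>j\<close> share the node at level \<open>j div m\<close> and then pass
  to children at least \<open>6 radius (j div m + 1)\<close> apart, which the tails of length
  \<open>2 radius (j div m + 1)\<close> cannot undo.\<close>
lemma tree_limit_gap:
  assumes eq: "\<forall>i<j. b i = b' i" and b: "\<not> b j" "b' j"
  shows "2 * radius (Suc (j div m)) \<le> tree_limit b' - tree_limit b
    \<and> tree_limit b' - tree_limit b \<le> 6 * radius (j div m)"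
proof -
  define K where "K = j div m"
  have j: "j = m * K + j mod m" "j mod m < m"
    using m by (auto simp: K_def)
  have same: "node K b = node K b'"
    using eq j by (intro node_cong) auto
  have "\<forall>i<j mod m. b (m * K + i) = b' (m * K + i)"
  proof (intro allI impI)
    fix i assume "i < j mod m"
    hence "m * K + i < j" using j(1) by linarith
    thus "b (m * K + i) = b' (m * K + i)" using eq by blast
  qed
  moreover have "m * K + j mod m = j" by (rule sym[OF j(1)])
  hence "\<not> b (m * K + j mod m)" "b' (m * K + j mod m)"
    using b by simp_all
  ultimately have "bin_value m (\<lambda>i. b (m * K + i)) < bin_value m (\<lambda>i. b' (m * K + i))"
    using j(2) by (intro bin_value_less_first_difference)
  hence "6 * radius K / branch_ratio \<le> node (Suc K) b' - node (Suc K) b"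
    using child_gap[OF _ radius_pos radius_le _ bin_value_less] node_mem_step same by simp
  hence split: "6 * radius (Suc K) \<le> node (Suc K) b' - node (Suc K) b"
    by (simp add: radius_Suc)
  have "radius K / branch_ratio \<le> radius K / 2"
    using radius_pos[of K] branch_ratio_gt_2 by (intro divide_left_mono) auto
  hence "radius (Suc K) \<le> radius K / 2" by (simp add: radius_Suc)
  thus ?thesis
    using split tree_limit_tail[of b "Suc K"] tree_limit_tail[of b' "Suc K"]
      node_mem_step[of K b] node_mem_step[of K b'] same
    unfolding K_def[symmetric] abs_le_iff by linarith
qed

definition embedding :: "real \<Rightarrow> real" where
  "embedding x = tree_limit (cantor_digits p x)"

definition embedding_constant :: real where
  "embedding_constant = max 1 (max (branch_ratio / (2 * d)) (6 * d * branch_ratio / (p - 2)))"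

text \<open>Digit \<open>j\<close> of a Cantor point is read at tree level \<open>j div m\<close>, so the gap estimates on both
  sides are powers of \<open>branch_ratio\<close> up to bounded factors.\<close>
lemma embedding_bilipschitz_pair:
  assumes x: "x \<in> cantor_set p" and y: "y \<in> cantor_set p" and xy: "x < y"
  shows "0 < embedding y - embedding x \<and> y - x \<le> embedding_constant * (embedding y - embedding x)
    \<and> embedding y - embedding x \<le> embedding_constant * (y - x)"
proof -
  have R: "0 < branch_ratio" using branch_ratio_gt_2 by simp
  have "cantor_point p (cantor_digits p x) < cantor_point p (cantor_digits p y)"
    using cantor_point_cantor_digits[OF p] x y xy by simp
  then obtain j where j: "\<forall>i<j. cantor_digits p x i = cantor_digits p y i"
      "\<not> cantor_digits p x j" "cantor_digits p y j"
    by (rule cantor_point_less_first_difference[OF p])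
  define K where "K = j div m"
  have tree: "2 * radius (Suc K) \<le> embedding y - embedding x \<and> embedding y - embedding x \<le> 6 * radius K"
    using tree_limit_gap[OF j] by (simp add: embedding_def K_def)
  have cantor: "(p - 2) / p ^ Suc j \<le> y - x \<and> y - x \<le> 1 / p ^ j"
    using cantor_point_gap[OF p j] cantor_point_cantor_digits[OF p] x y by simp
  have "j = m * K + j mod m" "j mod m < m"
    using m by (simp_all add: K_def)
  hence levels: "m * K \<le> j" "j < m * Suc K" by simp_all
  have "1 \<le> p" using p by simp
  hence "p ^ (m * K) \<le> p ^ j" "p ^ Suc j \<le> p ^ (m * Suc K)"
    using power_block_bounds levels by blast+
  hence block_lower: "branch_ratio ^ K \<le> p ^ j" and block_upper: "p ^ Suc j \<le> branch_ratio ^ Suc K"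
    by (simp_all only: branch_ratio_def power_mult)
  have upper: "embedding y - embedding x \<le> embedding_constant * (y - x)"
  proof -
    have "embedding y - embedding x \<le> (6 * d * branch_ratio / (p - 2)) * ((p - 2) / branch_ratio ^ Suc K)"
      using tree p R by (simp add: radius_def)
    also have "\<dots> \<le> (6 * d * branch_ratio / (p - 2)) * ((p - 2) / p ^ Suc j)"
      using block_upper p diameter_pos R by (intro mult_left_mono divide_left_mono) auto
    also have "\<dots> \<le> (6 * d * branch_ratio / (p - 2)) * (y - x)"
      using cantor p diameter_pos R by (intro mult_left_mono) auto
    also have "\<dots> \<le> embedding_constant * (y - x)"
      using xy by (intro mult_right_mono) (auto simp: embedding_constant_def)
    finally show ?thesis .
  qed
  have lower: "y - x \<le> embedding_constant * (embedding y - embedding x)"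
  proof -
    have "1 / p ^ j \<le> 1 / branch_ratio ^ K"
      using block_lower R p by (intro divide_left_mono) auto
    hence "y - x \<le> 1 / branch_ratio ^ K"
      using cantor by linarith
    also have "\<dots> = (branch_ratio / (2 * d)) * (2 * radius (Suc K))"
      using diameter_pos R by (simp add: radius_def)
    also have "\<dots> \<le> (branch_ratio / (2 * d)) * (embedding y - embedding x)"
      using tree diameter_pos R by (intro mult_left_mono) auto
    also have "\<dots> \<le> embedding_constant * (embedding y - embedding x)"
      using tree radius_pos[of "Suc K"] by (intro mult_right_mono) (auto simp: embedding_constant_def)
    finally show ?thesis .
  qed
  show ?thesis using upper lower tree radius_pos[of "Suc K"] by linarith
qed

lemma embedding_bilipschitz:
  "embedding ` cantor_set p \<subseteq> F \<and> strict_mono_on (cantor_set p) embedding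
    \<and> bilipschitz_on (cantor_set p) embedding embedding_constant"
  using tree_limit_mem strict_mono_bilipschitz_onI[of "cantor_set p", OF embedding_bilipschitz_pair]
  by (auto simp: embedding_def[abs_def])

end

section \<open>Embedding a regular set of dimension below one into a Cantor set\<close>

context regular_set
begin

text \<open>For \<open>s < 1\<close> this fails for large \<open>n\<close>, which makes \<open>E\<close> uniformly porous.\<close>
lemma spread_points_bound:
  assumes x: "x \<in> E" and r: "0 < r" "r \<le> d" and n: "1 \<le> n"
    and e: "\<And>i. i < n \<Longrightarrow> e i \<in> E \<and> x + real i * r / n < e i \<and> e i < x + real i * r / n + r / (3 * n)"
  shows "real n powr (1 - s) \<le> (C / c) * 9 powr s"
proof -
  have n0: "0 < real n" using n by simp
  define \<delta> where "\<delta> = 2 * r / (3 * n)"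
  have \<delta>: "0 < \<delta>" "\<delta> \<le> r" using r n by (auto simp: \<delta>_def field_simps)
  have sep: "\<delta> \<le> e i' - e i" if "i < i'" "i' < n" for i i'
  proof -
    have "real i + 1 \<le> real i'" using that by simp
    hence "(real i + 1) * (r / n) \<le> real i' * (r / n)" using r n0 by (intro mult_right_mono) auto
    hence "x + real i * r / n + r / n \<le> x + real i' * r / n"
      by (simp add: algebra_simps add_divide_distrib)
    moreover have "r / n - r / (3 * n) = \<delta>" by (simp add: \<delta>_def field_simps)
    ultimately show ?thesis using e[of i] e[of i'] that by linarith
  qed
  have inside: "\<bar>e i - x\<bar> \<le> r" if "i < n" for i
  proof -
    have "(real i + 1/3) * (r / n) \<le> real n * (r / n)"
      using that r n0 by (intro mult_right_mono) auto
    hence "x + real i * r / n + r / (3 * n) \<le> x + r"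
      using n0 by (simp add: field_simps)
    moreover have "x \<le> x + real i * r / n" using r n0 by simp
    ultimately show ?thesis using e[OF that] by linarith
  qed
  have inj: "inj_on e {..<n}"
  proof (rule linorder_inj_onI')
    fix i i' assume "i \<in> {..<n}" "i' \<in> {..<n}" "i < i'"
    thus "e i \<noteq> e i'" using sep[of i i'] \<delta> by auto
  qed
  have "\<forall>y\<in>e ` {..<n}. \<forall>y'\<in>e ` {..<n}. y \<noteq> y' \<longrightarrow> \<delta> \<le> \<bar>y - y'\<bar>"
  proof (intro ballI impI)
    fix y y' assume "y \<in> e ` {..<n}" "y' \<in> e ` {..<n}" "y \<noteq> y'"
    then obtain i i' where "i < n" "i' < n" "y = e i" "y' = e i'" "i \<noteq> i'" by auto
    thus "\<delta> \<le> \<bar>y - y'\<bar>" using sep[of i i'] sep[of i' i] by (cases "i < i'") auto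
  qed
  hence "real (card (e ` {..<n})) * (c * (\<delta> / 3) powr s) \<le> C * (r + \<delta> / 3) powr s"
    using e inside \<delta> r x by (intro packing_bound) auto
  also have "\<dots> \<le> C * (2 * r) powr s"
    using \<delta> C_pos dimension_nonneg by (intro mult_left_mono powr_mono2) auto
  finally have "real n * c * ((2 * r) powr s / (9 powr s * real n powr s)) \<le> C * (2 * r) powr s"
    using inj r n0 by (simp add: card_image \<delta>_def powr_divide powr_mult field_simps)
  hence "real n * c \<le> C * 9 powr s * real n powr s"
    using r n0 by (simp add: field_simps)
  hence "c * (real n / real n powr s) \<le> C * 9 powr s"
    using n0 by (simp add: divide_le_eq mult.commute)
  moreover have "real n powr (1 - s) = real n / real n powr s"
    using n0 by (simp add: powr_diff)
  ultimately show ?thesis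
    using c_pos by (simp add: le_divide_eq mult.commute)
qed

end

definition gapless :: "real set \<Rightarrow> real \<Rightarrow> real \<Rightarrow> real \<Rightarrow> bool" where
  "gapless E \<epsilon> x y \<longleftrightarrow>
     (\<forall>a b. min x y \<le> a \<and> b \<le> max x y \<and> \<epsilon> \<le> b - a \<longrightarrow> (\<exists>e\<in>E. a < e \<and> e < b))"

lemma gapless_sym: "gapless E \<epsilon> x y = gapless E \<epsilon> y x"
  unfolding gapless_def by (simp add: min.commute max.commute)

lemma gapless_subinterval:
  assumes "gapless E \<epsilon> u v" "min u v \<le> min x y" "max x y \<le> max u v"
  shows "gapless E \<epsilon> x y"
  unfolding gapless_def
proof (intro allI impI)
  fix a b assume "min x y \<le> a \<and> b \<le> max x y \<and> \<epsilon> \<le> b - a"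
  hence "min u v \<le> a \<and> b \<le> max u v \<and> \<epsilon> \<le> b - a" using assms(2,3) by linarith
  thus "\<exists>e\<in>E. a < e \<and> e < b" using assms(1) unfolding gapless_def by blast
qed

lemma gapless_pos:
  assumes "gapless E \<epsilon> x y"
  shows "0 < \<epsilon>"
proof (rule ccontr)
  assume "\<not> 0 < \<epsilon>"
  hence "min x y \<le> min x y \<and> min x y \<le> max x y \<and> \<epsilon> \<le> min x y - min x y" by simp
  hence "\<exists>e\<in>E. min x y < e \<and> e < min x y" using assms unfolding gapless_def by blast
  thus False by auto
qed

lemma gapless_refl: "0 < \<epsilon> \<Longrightarrow> gapless E \<epsilon> x x"
  unfolding gapless_def by auto

lemma gapless_if_close: "\<bar>x - y\<bar> < \<epsilon> \<Longrightarrow> gapless E \<epsilon> x y"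
  unfolding gapless_def by (auto simp: min_def max_def abs_if split: if_splits)

lemma gapless_mono:
  assumes "\<epsilon> \<le> \<epsilon>'" "gapless E \<epsilon> x y"
  shows "gapless E \<epsilon>' x y"
  unfolding gapless_def
proof (intro allI impI)
  fix a b assume "min x y \<le> a \<and> b \<le> max x y \<and> \<epsilon>' \<le> b - a"
  hence "min x y \<le> a \<and> b \<le> max x y \<and> \<epsilon> \<le> b - a" using assms(1) by linarith
  thus "\<exists>e\<in>E. a < e \<and> e < b" using assms(2) unfolding gapless_def by blast
qed

lemma gapless_trans:
  assumes y: "y \<in> E" and xy: "gapless E \<epsilon> x y" and yz: "gapless E \<epsilon> y z"
  shows "gapless E \<epsilon> x z"
  unfolding gapless_def
proof (intro allI impI)
  fix a b assume ab: "min x z \<le> a \<and> b \<le> max x z \<and> \<epsilon> \<le> b - a"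
  consider "a < y \<and> y < b" | "b \<le> y" | "y \<le> a" by linarith
  then show "\<exists>e\<in>E. a < e \<and> e < b"
  proof cases
    case 1
    then show ?thesis using y by blast
  next
    case 2
    hence "(min x y \<le> a \<and> b \<le> max x y) \<or> (min y z \<le> a \<and> b \<le> max y z)"
      using ab by (cases "x \<le> z") (auto simp: min_def max_def)
    thus ?thesis using xy yz ab unfolding gapless_def by blast
  next
    case 3
    hence "(min x y \<le> a \<and> b \<le> max x y) \<or> (min y z \<le> a \<and> b \<le> max y z)"
      using ab by (cases "x \<le> z") (auto simp: min_def max_def)
    thus ?thesis using xy yz ab unfolding gapless_def by blast
  qed
qed

locale regular_into_cantor = regular_set E s \<kappa> c C for E s \<kappa> c C +
  fixes q :: real and m n0 :: nat
  assumes q: "2 < q"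
    and n0: "1 \<le> n0" "(C / c) * 9 powr s < real n0 powr (1 - s)"
    and m: "1 \<le> m" "(C / c) * (18 * real n0) powr s \<le> (2 / q powr s) ^ m"
begin

definition spread :: real where "spread = 3 * real n0"

definition branch_ratio :: real where "branch_ratio = q ^ m"

text \<open>Clusters of level \<open>k\<close> are the classes of \<open>gapless E (gap_scale k)\<close>; one level of clusters
  corresponds to \<open>m\<close> levels of the Cantor set.\<close>
definition gap_scale :: "nat \<Rightarrow> real" where "gap_scale k = 2 * d / branch_ratio ^ k"

lemma spread_ge_3: "3 \<le> spread"
  using n0 by (simp add: spread_def)

lemma branch_ratio_gt_2: "2 < branch_ratio"
  using q m power_increasing[of 1 m q] by (simp add: branch_ratio_def)

lemma gap_scale_pos: "0 < gap_scale k"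
  using diameter_pos branch_ratio_gt_2 by (simp add: gap_scale_def)

lemma gap_scale_Suc: "gap_scale (Suc k) = gap_scale k / branch_ratio"
  by (simp add: gap_scale_def field_simps)

lemma gap_scale_Suc_le: "gap_scale (Suc k) \<le> gap_scale k"
  using gap_scale_pos[of k] branch_ratio_gt_2 by (simp add: gap_scale_Suc divide_le_eq)

lemma gap_scale_le: "gap_scale k \<le> 2 * d"
  using diameter_pos branch_ratio_gt_2 one_le_power[of branch_ratio k]
  by (simp add: gap_scale_def divide_le_eq mult_le_cancel_left1)

lemma porous:
  assumes x: "x \<in> E" and r: "0 < r" "r \<le> d"
  shows "\<exists>a b. x \<le> a \<and> b \<le> x + r \<and> r / (3 * n0) \<le> b - a \<and> (\<forall>e\<in>E. \<not> (a < e \<and> e < b))"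
proof (rule ccontr)
  assume no_gap: "\<not> ?thesis"
  have "\<exists>e. i < n0 \<longrightarrow> e \<in> E \<and> x + real i * r / n0 < e \<and> e < x + real i * r / n0 + r / (3 * n0)" for i
  proof (cases "i < n0")
    case True
    have "(real i + 1 / 3) * (r / n0) \<le> real n0 * (r / n0)"
      using True r by (intro mult_right_mono) auto
    hence "x + real i * r / n0 + r / (3 * n0) \<le> x + r"
      using n0 by (simp add: field_simps)
    moreover have "x \<le> x + real i * r / n0" using r by simp
    ultimately have "\<not> (\<forall>e\<in>E. \<not> (x + real i * r / n0 < e \<and> e < x + real i * r / n0 + r / (3 * n0)))"
      using no_gap by (metis add_diff_cancel_left' order_refl)
    thus ?thesis by auto
  qed simp
  then obtain e where "\<And>i. i < n0 \<Longrightarrow> e i \<in> E \<and> x + real i * r / n0 < e i \<and> e i < x + real i * r / n0 + r / (3 * n0)"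
    by metis
  hence "real n0 powr (1 - s) \<le> (C / c) * 9 powr s"
    by (rule spread_points_bound[OF x r n0(1)])
  thus False using n0(2) by simp
qed

lemma gapless_dist_less:
  assumes x: "x \<in> E" and y: "y \<in> E" and gapless: "gapless E \<epsilon> x y"
  shows "\<bar>x - y\<bar> < spread * \<epsilon>"
proof -
  have less: "v - u < spread * \<epsilon>" if uv: "u \<in> E" "v \<in> E" "u < v" "gapless E \<epsilon> u v" for u v
  proof -
    have "0 < v - u" "v - u \<le> d" using dist_le_diameter[OF uv(2,1)] uv(3) by auto
    then obtain a b where ab: "u \<le> a" "b \<le> u + (v - u)" "(v - u) / (3 * n0) \<le> b - a"
        "\<forall>e\<in>E. \<not> (a < e \<and> e < b)"
      using porous[OF uv(1)] by blast
    have "\<not> \<epsilon> \<le> b - a"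
      using uv(3,4) ab unfolding gapless_def by auto
    hence "(v - u) / (3 * n0) < \<epsilon>" using ab(3) by simp
    thus ?thesis using n0 by (simp add: spread_def divide_less_eq mult.commute)
  qed
  consider "x < y" | "y < x" | "x = y" by linarith
  thus ?thesis
  proof cases
    case 3
    thus ?thesis using gapless_pos[OF gapless] spread_ge_3 by simp
  qed (use less[OF x y] less[OF y x] gapless gapless_sym in force)+
qed

definition cluster :: "nat \<Rightarrow> real \<Rightarrow> real set" where
  "cluster k y = {z \<in> E. gapless E (gap_scale k) z y}"

definition subclusters :: "nat \<Rightarrow> real \<Rightarrow> real set set" where
  "subclusters k x = cluster (Suc k) ` cluster k x"

text \<open>The subclusters formed by \<open>left_part k x\<close> are exactly those preceding the one of \<open>x\<close>, so
  \<open>subcluster_rank k x\<close> is the position of that subcluster counted from the left.\<close>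
definition left_part :: "nat \<Rightarrow> real \<Rightarrow> real set" where
  "left_part k x = {z \<in> cluster k x. z < x \<and> z \<notin> cluster (Suc k) x}"

definition subcluster_rank :: "nat \<Rightarrow> real \<Rightarrow> nat" where
  "subcluster_rank k x = card (cluster (Suc k) ` left_part k x)"

lemma gapless_gap_scale_0: "x \<in> E \<Longrightarrow> y \<in> E \<Longrightarrow> gapless E (gap_scale 0) x y"
  using dist_le_diameter[of x y] diameter_pos by (intro gapless_if_close) (simp add: gap_scale_def)

lemma cluster_eq:
  "y \<in> E \<Longrightarrow> y' \<in> E \<Longrightarrow> gapless E (gap_scale k) y y' \<Longrightarrow> cluster k y = cluster k y'"
  unfolding cluster_def using gapless_trans gapless_sym by blast

lemma mem_cluster_self: "y \<in> E \<Longrightarrow> y \<in> cluster k y"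
  using gapless_refl[OF gap_scale_pos] by (simp add: cluster_def)

text \<open>The packing bound for \<open>N\<close> points of one cluster of scale \<open>\<epsilon>\<close>, one from each subcluster: they
  lie within \<open>spread * \<epsilon>\<close> of each other and are \<open>\<epsilon> / branch_ratio\<close>-separated.\<close>
lemma subcluster_count_le:
  assumes packing: "real N * (c * (\<epsilon> / branch_ratio / 3) powr s)
      \<le> C * (spread * \<epsilon> + \<epsilon> / branch_ratio / 3) powr s"
    and \<epsilon>: "0 < \<epsilon>"
  shows "N \<le> 2 ^ m"
proof -
  define u where "u = \<epsilon> / branch_ratio / 3"
  have R: "2 < branch_ratio" by (rule branch_ratio_gt_2)
  have u: "0 < u" "u \<le> \<epsilon>" using \<epsilon> R by (auto simp: u_def field_simps)
  have "spread * \<epsilon> + u \<le> 2 * spread * \<epsilon>"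
    using u \<epsilon> spread_ge_3 mult_right_mono[of 3 spread \<epsilon>] by linarith
  hence "(spread * \<epsilon> + u) powr s \<le> (2 * spread * \<epsilon>) powr s"
    using u \<epsilon> spread_ge_3 dimension_nonneg by (intro powr_mono2) auto
  also have "2 * spread * \<epsilon> = (18 * real n0) * branch_ratio * u"
    using R by (simp add: u_def spread_def field_simps)
  also have "((18 * real n0) * branch_ratio * u) powr s = (18 * real n0) powr s * (q powr s) ^ m * u powr s"
    using q u R by (simp add: powr_mult branch_ratio_def power_powr_commute)
  finally have "C * (spread * \<epsilon> + u) powr s \<le> C * ((18 * real n0) powr s * (q powr s) ^ m * u powr s)"
    using C_pos by (intro mult_left_mono) auto
  with packing have "real N * c * u powr s \<le> (C * (18 * real n0) powr s * (q powr s) ^ m) * u powr s"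
    unfolding u_def[symmetric] by (simp add: mult_ac)
  hence "real N * c \<le> C * (18 * real n0) powr s * (q powr s) ^ m"
    using u by simp
  hence "real N \<le> (C / c) * (18 * real n0) powr s * (q powr s) ^ m"
    using c_pos by (simp add: field_simps)
  also have "\<dots> \<le> (2 / q powr s) ^ m * (q powr s) ^ m"
    using m(2) by (intro mult_right_mono) auto
  also have "\<dots> = 2 ^ m"
    using q by (simp add: power_mult_distrib[symmetric])
  finally show ?thesis by (simp flip: of_nat_le_iff)
qed

lemma subclusters_finite_card:
  assumes x: "x \<in> E"
  shows "finite (subclusters k x) \<and> card (subclusters k x) \<le> 2 ^ m"
proof (rule finite_if_finite_subsets_card_bdd)
  fix G assume G: "G \<subseteq> subclusters k x" "finite G"
  have "\<forall>D\<in>G. \<exists>z. z \<in> cluster k x \<and> cluster (Suc k) z = D"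
    using G(1) by (auto simp: subclusters_def)
  from bchoice[OF this] obtain f where "\<forall>D\<in>G. f D \<in> cluster k x \<and> cluster (Suc k) (f D) = D"
    by blast
  hence f: "\<And>D. D \<in> G \<Longrightarrow> f D \<in> cluster k x \<and> cluster (Suc k) (f D) = D"
    by blast
  have inj: "inj_on f G"
  proof (rule inj_onI)
    fix D D' assume D: "D \<in> G" "D' \<in> G" "f D = f D'"
    have "D = cluster (Suc k) (f D)" using f[OF D(1)] by simp
    also have "\<dots> = D'" using f[OF D(2)] D(3) by simp
    finally show "D = D'" .
  qed
  have fE: "f D \<in> E" "gapless E (gap_scale k) (f D) x" if "D \<in> G" for D
    using f[OF that] by (auto simp: cluster_def)
  define Y where "Y = f ` G"
  have Y: "finite Y" "Y \<subseteq> E" using G(2) fE by (auto simp: Y_def)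
  have near: "\<forall>y\<in>Y. \<bar>y - x\<bar> \<le> spread * gap_scale k"
    unfolding Y_def using gapless_dist_less[OF fE(1) x fE(2)] by (auto intro: less_imp_le)
  have separated: "\<forall>y\<in>Y. \<forall>y'\<in>Y. y \<noteq> y' \<longrightarrow> gap_scale (Suc k) \<le> \<bar>y - y'\<bar>"
  proof (intro ballI impI)
    fix y y' assume "y \<in> Y" "y' \<in> Y" "y \<noteq> y'"
    then obtain D D' where D: "D \<in> G" "D' \<in> G" "y = f D" "y' = f D'" "D \<noteq> D'"
      by (auto simp: Y_def)
    have "\<not> gapless E (gap_scale (Suc k)) y y'"
    proof
      assume "gapless E (gap_scale (Suc k)) y y'"
      hence "cluster (Suc k) y = cluster (Suc k) y'" using D fE by (intro cluster_eq) auto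
      moreover have "cluster (Suc k) y = D" "cluster (Suc k) y' = D'"
        using D f by auto
      ultimately show False using D(5) by simp
    qed
    thus "gap_scale (Suc k) \<le> \<bar>y - y'\<bar>" using gapless_if_close[of y y' "gap_scale (Suc k)" E] by linarith
  qed
  have "gap_scale (Suc k) \<le> 3 * d" using gap_scale_le[of "Suc k"] diameter_pos by simp
  hence "real (card Y) * (c * (gap_scale (Suc k) / 3) powr s) \<le> C * (spread * gap_scale k + gap_scale (Suc k) / 3) powr s"
    by (rule packing_bound[OF Y x near separated gap_scale_pos])
  hence "card Y \<le> 2 ^ m"
    using gap_scale_pos[of k] by (intro subcluster_count_le[of _ "gap_scale k"]) (simp_all add: gap_scale_Suc)
  thus "card G \<le> 2 ^ m" using inj by (simp add: Y_def card_image)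
qed

lemma left_part_subclusters: "cluster (Suc k) ` left_part k x \<subseteq> subclusters k x"
  by (auto simp: left_part_def subclusters_def)

lemma cluster_not_in_left_part:
  assumes x: "x \<in> E"
  shows "cluster (Suc k) x \<notin> cluster (Suc k) ` left_part k x"
proof
  assume "cluster (Suc k) x \<in> cluster (Suc k) ` left_part k x"
  then obtain z where z: "z \<in> left_part k x" "cluster (Suc k) x = cluster (Suc k) z" by auto
  hence "z \<in> cluster (Suc k) x"
    using mem_cluster_self[of z "Suc k"] by (simp add: left_part_def cluster_def)
  thus False using z(1) by (simp add: left_part_def)
qed

lemma subcluster_rank_less:
  assumes x: "x \<in> E"
  shows "subcluster_rank k x < 2 ^ m"
proof -
  have "x \<in> cluster k x" by (rule mem_cluster_self[OF x])
  hence mem: "cluster (Suc k) x \<in> subclusters k x" unfolding subclusters_def by (rule imageI)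
  have "cluster (Suc k) ` left_part k x \<noteq> subclusters k x"
  proof
    assume "cluster (Suc k) ` left_part k x = subclusters k x"
    thus False using mem cluster_not_in_left_part[OF x, of k] by simp
  qed
  hence "cluster (Suc k) ` left_part k x \<subset> subclusters k x"
    by (rule psubsetI[OF left_part_subclusters])
  hence "subcluster_rank k x < card (subclusters k x)"
    unfolding subcluster_rank_def using subclusters_finite_card[OF x] by (intro psubset_card_mono) auto
  thus ?thesis using subclusters_finite_card[OF x, of k] by linarith
qed

lemma mem_left_part_iff:
  "z \<in> left_part k x \<longleftrightarrow>
    z \<in> E \<and> gapless E (gap_scale k) z x \<and> z < x \<and> \<not> gapless E (gap_scale (Suc k)) z x"
  by (auto simp: left_part_def cluster_def)

lemma subcluster_rank_eq:
  assumes x: "x \<in> E" and y: "y \<in> E" and xy: "x < y"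
    and close: "gapless E (gap_scale (Suc k)) x y"
  shows "subcluster_rank k x = subcluster_rank k y"
proof -
  have close_k: "gapless E (gap_scale k) x y"
    using gapless_mono[OF gap_scale_Suc_le close] .
  have "left_part k x = left_part k y"
  proof (intro set_eqI iffI)
    fix z assume "z \<in> left_part k x"
    hence z: "z \<in> E" "gapless E (gap_scale k) z x" "z < x" "\<not> gapless E (gap_scale (Suc k)) z x"
      by (simp_all add: mem_left_part_iff)
    have "\<not> gapless E (gap_scale (Suc k)) z y"
    proof
      assume "gapless E (gap_scale (Suc k)) z y"
      moreover have "gapless E (gap_scale (Suc k)) y x" using close gapless_sym by metis
      ultimately show False using z(4) gapless_trans[OF y] by blast
    qed
    thus "z \<in> left_part k y"
      using z xy gapless_trans[OF x z(2) close_k] by (simp add: mem_left_part_iff)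
  next
    fix z assume "z \<in> left_part k y"
    hence z: "z \<in> E" "gapless E (gap_scale k) z y" "z < y" "\<not> gapless E (gap_scale (Suc k)) z y"
      by (simp_all add: mem_left_part_iff)
    have far: "\<not> gapless E (gap_scale (Suc k)) z x"
    proof
      assume "gapless E (gap_scale (Suc k)) z x"
      thus False using z(4) gapless_trans[OF x _ close] by blast
    qed
    have "z < x"
    proof (rule ccontr)
      assume "\<not> z < x"
      hence "gapless E (gap_scale (Suc k)) z y"
        using z(3) xy by (intro gapless_subinterval[OF close]) auto
      thus False using z(4) by simp
    qed
    moreover have "gapless E (gap_scale k) y x" using close_k gapless_sym by metis
    ultimately show "z \<in> left_part k x"
      using z far gapless_trans[OF y z(2)] by (simp add: mem_left_part_iff)
  qed
  thus ?thesis by (simp add: subcluster_rank_def)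
qed

lemma subcluster_rank_less_rank:
  assumes x: "x \<in> E" and y: "y \<in> E" and xy: "x < y"
    and close: "gapless E (gap_scale k) x y" and far: "\<not> gapless E (gap_scale (Suc k)) x y"
  shows "subcluster_rank k x < subcluster_rank k y"
proof -
  have sub: "left_part k x \<subseteq> left_part k y"
  proof
    fix z assume "z \<in> left_part k x"
    hence z: "z \<in> E" "gapless E (gap_scale k) z x" "z < x" "\<not> gapless E (gap_scale (Suc k)) z x"
      by (simp_all add: mem_left_part_iff)
    have "\<not> gapless E (gap_scale (Suc k)) z y"
    proof
      assume zy: "gapless E (gap_scale (Suc k)) z y"
      have "gapless E (gap_scale (Suc k)) x y"
        by (rule gapless_subinterval[OF zy]) (use z(3) xy in auto)
      thus False using far by simp
    qed
    thus "z \<in> left_part k y"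
      using z xy gapless_trans[OF x z(2) close] by (simp add: mem_left_part_iff)
  qed
  have "x \<in> left_part k y"
    using x xy close far by (simp add: mem_left_part_iff)
  hence "cluster (Suc k) x \<in> cluster (Suc k) ` left_part k y" by (rule imageI)
  hence "cluster (Suc k) ` left_part k x \<noteq> cluster (Suc k) ` left_part k y"
    using cluster_not_in_left_part[OF x, of k] by auto
  hence "cluster (Suc k) ` left_part k x \<subset> cluster (Suc k) ` left_part k y"
    using image_mono[OF sub] by (rule psubsetI[rotated])
  moreover have "finite (cluster (Suc k) ` left_part k y)"
    using finite_subset[OF left_part_subclusters] subclusters_finite_card[OF y] by blast
  ultimately show ?thesis
    unfolding subcluster_rank_def by (rule psubset_card_mono[rotated])
qed

lemma first_separating_level:
  assumes x: "x \<in> E" and y: "y \<in> E" and xy: "x < y"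
  obtains K where "gapless E (gap_scale K) x y" "\<not> gapless E (gap_scale (Suc K)) x y"
    "\<forall>k<K. gapless E (gap_scale (Suc k)) x y"
proof -
  obtain n where n: "2 * d * spread / (y - x) < branch_ratio ^ n"
    using real_arch_pow branch_ratio_gt_2 by fastforce
  have "\<not> gapless E (gap_scale (Suc n)) x y"
  proof
    assume "gapless E (gap_scale (Suc n)) x y"
    hence "y - x < spread * gap_scale (Suc n)"
      using gapless_dist_less[OF x y] xy by simp
    hence "(y - x) * branch_ratio ^ Suc n < 2 * d * spread"
      using branch_ratio_gt_2 by (simp add: gap_scale_def field_simps)
    moreover have "(y - x) * branch_ratio ^ n \<le> (y - x) * branch_ratio ^ Suc n"
      using xy branch_ratio_gt_2 by (intro mult_left_mono power_increasing) auto
    moreover have "2 * d * spread < (y - x) * branch_ratio ^ n"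
      using n xy by (simp add: divide_less_eq mult.commute)
    ultimately show False by linarith
  qed
  hence ex: "\<exists>k. \<not> gapless E (gap_scale (Suc k)) x y" ..
  define K where "K = (LEAST k. \<not> gapless E (gap_scale (Suc k)) x y)"
  have before: "\<forall>k<K. gapless E (gap_scale (Suc k)) x y"
    using not_less_Least unfolding K_def by blast
  have "gapless E (gap_scale K) x y"
    using gapless_gap_scale_0[OF x y] before by (cases K) auto
  moreover have "\<not> gapless E (gap_scale (Suc K)) x y"
    unfolding K_def by (rule LeastI_ex[OF ex])
  ultimately show ?thesis using before that by blast
qed

definition address :: "real \<Rightarrow> nat \<Rightarrow> bool" where
  "address x j = bin_digit m (subcluster_rank (j div m) x) (j mod m)"

lemma address_first_difference:
  assumes x: "x \<in> E" and y: "y \<in> E" and xy: "x < y"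
  obtains K i where "i < m" "\<forall>j<m * K + i. address x j = address y j"
    "\<not> address x (m * K + i)" "address y (m * K + i)"
    "gapless E (gap_scale K) x y" "\<not> gapless E (gap_scale (Suc K)) x y"
proof -
  obtain K where K: "gapless E (gap_scale K) x y" "\<not> gapless E (gap_scale (Suc K)) x y"
      "\<forall>k<K. gapless E (gap_scale (Suc k)) x y"
    using first_separating_level[OF x y xy] .
  have same: "subcluster_rank k x = subcluster_rank k y" if "k < K" for k
    using K(3) that subcluster_rank_eq[OF x y xy] by blast
  obtain i where i: "i < m" "\<forall>j<i. bin_digit m (subcluster_rank K x) j = bin_digit m (subcluster_rank K y) j"
      "\<not> bin_digit m (subcluster_rank K x) i" "bin_digit m (subcluster_rank K y) i"
    using bin_digit_first_difference[OF subcluster_rank_less_rank[OF x y xy K(1,2)] subcluster_rank_less[OF y]]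
    by blast
  have "address x j = address y j" if j: "j < m * K + i" for j
  proof (cases "j < m * K")
    case True
    hence "j div m < K" by (simp add: less_mult_imp_div_less mult.commute)
    thus ?thesis using same by (simp add: address_def)
  next
    case False
    hence "j div m = K" using j i(1) by (intro div_nat_eqI) auto
    moreover have "j mod m < i" using False j \<open>j div m = K\<close>
      by (metis add_less_imp_less_left div_mult_mod_eq mult.commute)
    ultimately show ?thesis using i(2) by (simp add: address_def)
  qed
  moreover have "(m * K + i) div m = K" "(m * K + i) mod m = i"
    using i(1) by auto
  hence "\<not> address x (m * K + i)" "address y (m * K + i)"
    unfolding address_def using i(3,4) by simp_all
  ultimately show ?thesis
    using that[OF i(1)] K(1,2) by blast
qed

definition embedding :: "real \<Rightarrow> real" where
  "embedding x = cantor_point q (address x)"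

definition embedding_constant :: real where
  "embedding_constant = max 1 (max (branch_ratio / (2 * d)) (2 * d * spread * branch_ratio / (q - 2)))"

text \<open>If \<open>x < y\<close> separate at cluster level \<open>K\<close>, then \<open>y - x\<close> is comparable to \<open>gap_scale K\<close>, and
  their addresses first differ at a digit \<open>j\<close> with \<open>m K \<le> j < m (K + 1)\<close>, so \<open>embedding y - embedding x\<close>
  is comparable to \<open>q ^ - j\<close>, i.e. to \<open>branch_ratio ^ - K\<close>.\<close>
lemma embedding_bilipschitz_pair:
  assumes x: "x \<in> E" and y: "y \<in> E" and xy: "x < y"
  shows "0 < embedding y - embedding x \<and> y - x \<le> embedding_constant * (embedding y - embedding x)
    \<and> embedding y - embedding x \<le> embedding_constant * (y - x)"
proof -
  have R: "0 < branch_ratio" using branch_ratio_gt_2 by simp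
  obtain K i where i: "i < m" "\<forall>j<m * K + i. address x j = address y j"
      "\<not> address x (m * K + i)" "address y (m * K + i)"
    and K: "gapless E (gap_scale K) x y" "\<not> gapless E (gap_scale (Suc K)) x y"
    using address_first_difference[OF x y xy] by blast
  define j where "j = m * K + i"
  have gap: "(q - 2) / q ^ Suc j \<le> embedding y - embedding x \<and> embedding y - embedding x \<le> 1 / q ^ j"
    unfolding embedding_def j_def by (rule cantor_point_gap[OF q i(2-4)])
  have levels: "m * K \<le> j" "j < m * Suc K" using i(1) by (simp_all add: j_def)
  have "1 \<le> q" using q by simp
  hence "q ^ (m * K) \<le> q ^ j" "q ^ Suc j \<le> q ^ (m * Suc K)"
    using power_block_bounds levels by blast+
  hence block_lower: "branch_ratio ^ K \<le> q ^ j" and block_upper: "q ^ Suc j \<le> branch_ratio ^ Suc K"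
    by (simp_all only: branch_ratio_def power_mult)
  have far: "2 * d / branch_ratio ^ Suc K \<le> y - x"
    using K(2) gapless_if_close[of x y _ E] xy by (force simp: gap_scale_def)
  have near: "y - x < 2 * d * spread / branch_ratio ^ K"
    using gapless_dist_less[OF x y K(1)] xy by (simp add: gap_scale_def mult_ac)
  have upper: "embedding y - embedding x \<le> embedding_constant * (y - x)"
  proof -
    have "1 / q ^ j \<le> 1 / branch_ratio ^ K"
      using block_lower R q by (intro divide_left_mono) auto
    hence "embedding y - embedding x \<le> (branch_ratio / (2 * d)) * (2 * d / branch_ratio ^ Suc K)"
      using gap diameter_pos R by simp
    also have "\<dots> \<le> (branch_ratio / (2 * d)) * (y - x)"
      using far diameter_pos R by (intro mult_left_mono) auto
    also have "\<dots> \<le> embedding_constant * (y - x)"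
      using xy by (intro mult_right_mono) (auto simp: embedding_constant_def)
    finally show ?thesis .
  qed
  have pos: "0 < (q - 2) / q ^ Suc j" using q by simp
  have lower: "y - x \<le> embedding_constant * (embedding y - embedding x)"
  proof -
    have "y - x \<le> (2 * d * spread * branch_ratio / (q - 2)) * ((q - 2) / branch_ratio ^ Suc K)"
      using near q R by simp
    also have "\<dots> \<le> (2 * d * spread * branch_ratio / (q - 2)) * ((q - 2) / q ^ Suc j)"
      using block_upper q diameter_pos spread_ge_3 R by (intro mult_left_mono divide_left_mono) auto
    also have "\<dots> \<le> (2 * d * spread * branch_ratio / (q - 2)) * (embedding y - embedding x)"
      using gap q diameter_pos spread_ge_3 R by (intro mult_left_mono) auto
    also have "\<dots> \<le> embedding_constant * (embedding y - embedding x)"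
      using gap pos by (intro mult_right_mono) (auto simp: embedding_constant_def)
    finally show ?thesis .
  qed
  show ?thesis using upper lower gap pos by linarith
qed

lemma embedding_bilipschitz:
  "embedding ` E \<subseteq> cantor_set q \<and> strict_mono_on E embedding \<and> bilipschitz_on E embedding embedding_constant"
  using cantor_point_in_cantor_set[OF q] strict_mono_bilipschitz_onI[of E, OF embedding_bilipschitz_pair]
  by (auto simp: embedding_def[abs_def])

end

section \<open>Uniform constants\<close>

lemma ex_power_ge:
  fixes x M :: real
  assumes "1 < x"
  shows "\<exists>m\<ge>1. M \<le> x ^ m"
proof -
  obtain n where n: "M < x ^ n" using real_arch_pow[OF assms] by blast
  have "x ^ n \<le> x ^ max 1 n" using assms by (intro power_increasing) auto
  thus ?thesis using n by (intro exI[of _ "max 1 n"]) auto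
qed

lemma ex_nat_powr_gt:
  fixes K a :: real
  assumes a: "0 < a"
  shows "\<exists>n\<ge>1. K < real n powr a"
proof -
  define n where "n = nat \<lceil>(max 1 K) powr (1 / a)\<rceil> + 1"
  have "(max 1 K) powr (1 / a) < real n" unfolding n_def by linarith
  hence "((max 1 K) powr (1 / a)) powr a < real n powr a"
    using a by (intro powr_less_mono2) auto
  moreover have "((max 1 K) powr (1 / a)) powr a = max 1 K"
    using a by (simp add: powr_powr)
  ultimately show ?thesis by (intro exI[of _ n]) (auto simp: n_def)
qed

lemma cantor_ratio_unique:
  fixes p p' s :: real
  assumes "1 < p" "1 < p'" "p powr s = 2" "p' powr s = 2"
  shows "p = p'"
proof -
  have "s \<noteq> 0" using assms(1,3) by auto
  hence "p = (p powr s) powr (1 / s)" "p' = (p' powr s) powr (1 / s)"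
    using assms(1,2) by (simp_all add: powr_powr)
  thus ?thesis using assms(3,4) by simp
qed

lemma cantor_embeds_into_regular:
  assumes p: "2 < p" and pt: "2 < p powr t" and d: "0 < d"
  shows "\<exists>L\<ge>1. \<forall>F \<mu>. ahlfors_regular F t \<mu> c C \<and> diameter F = d \<longrightarrow> bilipschitz_embeds (cantor_set p) F L"
proof -
  obtain m where m: "1 \<le> m" "(C / c) * 6 powr t \<le> (p powr t / 2) ^ m"
    using ex_power_ge[of "p powr t / 2"] pt by auto
  define L where "L = max 1 (max (p ^ m / (2 * d)) (6 * d * p ^ m / (p - 2)))"
  show ?thesis
  proof (intro exI[of _ L] conjI allI impI)
    fix F \<mu> assume F: "ahlfors_regular F t \<mu> c C \<and> diameter F = d"
    interpret cantor_into_regular F t \<mu> c C p m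
      using F d p m by unfold_locales auto
    have "embedding_constant = L"
      using F by (simp add: embedding_constant_def branch_ratio_def L_def)
    thus "bilipschitz_embeds (cantor_set p) F L"
      unfolding bilipschitz_embeds_def using embedding_bilipschitz by blast
  qed (simp add: L_def)
qed

lemma regular_embeds_into_cantor:
  assumes q: "2 < q" and qs: "q powr s < 2" and d: "0 < d"
  shows "\<exists>L\<ge>1. \<forall>E \<kappa>. ahlfors_regular E s \<kappa> c C \<and> diameter E = d \<longrightarrow> bilipschitz_embeds E (cantor_set q) L"
proof -
  have "q powr s < q" using qs q by simp
  hence "s < 1" using powr_less_cancel_iff[of q s 1] q by simp
  then obtain n0 where n0: "1 \<le> n0" "(C / c) * 9 powr s < real n0 powr (1 - s)"
    using ex_nat_powr_gt[of "1 - s"] by auto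
  obtain m where m: "1 \<le> m" "(C / c) * (18 * real n0) powr s \<le> (2 / q powr s) ^ m"
    using ex_power_ge[of "2 / q powr s"] qs q by auto
  define L where "L = max 1 (max (q ^ m / (2 * d)) (2 * d * (3 * real n0) * q ^ m / (q - 2)))"
  show ?thesis
  proof (intro exI[of _ L] conjI allI impI)
    fix E \<kappa> assume E: "ahlfors_regular E s \<kappa> c C \<and> diameter E = d"
    interpret regular_into_cantor E s \<kappa> c C q m n0
      using E d q n0 m by unfold_locales auto
    have "embedding_constant = L"
      using E by (simp add: embedding_constant_def branch_ratio_def spread_def L_def)
    thus "bilipschitz_embeds E (cantor_set q) L"
      unfolding bilipschitz_embeds_def using embedding_bilipschitz by blast
  qed (simp add: L_def)
qed

lemma bilipschitz_embeds_diameter_nonpos: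
  assumes "bounded E" "diameter E \<le> 0" "y \<in> F"
  shows "bilipschitz_embeds E F L"
  unfolding bilipschitz_embeds_def
proof (intro exI[of _ "\<lambda>_. y"] conjI)
  have eq: "x = x'" if "x \<in> E" "x' \<in> E" for x x'
  proof -
    have "dist x x' \<le> 0" using diameter_bounded_bound[OF assms(1) that] assms(2) by linarith
    thus ?thesis by simp
  qed
  show "strict_mono_on E (\<lambda>_. y)" using eq by (intro strict_mono_onI) force
  show "bilipschitz_on E (\<lambda>_. y) L" using eq by (force simp: bilipschitz_on_def)
qed (use assms(3) in auto)

text \<open>The Cantor set is pinned down by the dimension, \<open>p = 2 powr (1 / s)\<close>, so one constant serves
  all admissible \<open>E\<close>; the same holds for the Cantor target below.\<close>
lemma cantor_domain_embedding:
  assumes st: "s < t" and dF: "0 < dF"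
  shows "\<exists>L\<ge>1. \<forall>E F \<kappa> \<mu>. (\<exists>p>2. E = cantor_set p) \<and> ahlfors_regular E s \<kappa> c1 C1
    \<and> ahlfors_regular F t \<mu> c2 C2 \<and> diameter F = dF \<longrightarrow> bilipschitz_embeds E F L"
proof (cases "\<exists>p>2. \<exists>\<kappa>. ahlfors_regular (cantor_set p) s \<kappa> c1 C1")
  case True
  then obtain p \<kappa> where p: "2 < p" "ahlfors_regular (cantor_set p) s \<kappa> c1 C1" by blast
  have ps: "p powr s = 2" by (rule cantor_set_dimension[OF p])
  have "p powr s < p powr t" using p st by simp
  hence "2 < p powr t" using ps by simp
  then obtain L where L: "L \<ge> 1"
      "\<forall>F \<mu>. ahlfors_regular F t \<mu> c2 C2 \<and> diameter F = dF \<longrightarrow> bilipschitz_embeds (cantor_set p) F L"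
    using cantor_embeds_into_regular[OF p(1) _ dF] by blast
  show ?thesis
  proof (intro exI[of _ L] conjI allI impI)
    fix E F \<kappa>' \<mu> assume H: "(\<exists>p>2. E = cantor_set p) \<and> ahlfors_regular E s \<kappa>' c1 C1
      \<and> ahlfors_regular F t \<mu> c2 C2 \<and> diameter F = dF"
    then obtain p' where p': "2 < p'" "E = cantor_set p'" by blast
    have "p' powr s = 2" using cantor_set_dimension p' H by blast
    hence "p' = p" using cantor_ratio_unique[of p' p s] p'(1) p(1) ps by simp
    thus "bilipschitz_embeds E F L" using L(2) H p' by blast
  qed (rule L(1))
qed (auto intro!: exI[of _ 1])

lemma cantor_target_embedding:
  assumes st: "s < t"
  shows "\<exists>L\<ge>1. \<forall>E F \<kappa> \<mu>. (\<exists>q>2. F = cantor_set q) \<and> ahlfors_regular E s \<kappa> c1 C1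
    \<and> ahlfors_regular F t \<mu> c2 C2 \<and> diameter E = dE \<longrightarrow> bilipschitz_embeds E F L"
proof (cases "0 < dE \<and> (\<exists>q>2. \<exists>\<mu>. ahlfors_regular (cantor_set q) t \<mu> c2 C2)")
  case True
  then obtain q \<mu> where q: "2 < q" "ahlfors_regular (cantor_set q) t \<mu> c2 C2" and dE: "0 < dE" by blast
  have qt: "q powr t = 2" by (rule cantor_set_dimension[OF q])
  have "q powr s < q powr t" using q st by simp
  hence "q powr s < 2" using qt by simp
  then obtain L where L: "L \<ge> 1"
      "\<forall>E \<kappa>. ahlfors_regular E s \<kappa> c1 C1 \<and> diameter E = dE \<longrightarrow> bilipschitz_embeds E (cantor_set q) L"
    using regular_embeds_into_cantor[OF q(1) _ dE] by blast
  show ?thesis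
  proof (intro exI[of _ L] conjI allI impI)
    fix E F \<kappa> \<mu>' assume H: "(\<exists>q>2. F = cantor_set q) \<and> ahlfors_regular E s \<kappa> c1 C1
      \<and> ahlfors_regular F t \<mu>' c2 C2 \<and> diameter E = dE"
    then obtain q' where q': "2 < q'" "F = cantor_set q'" by blast
    have "q' powr t = 2" using cantor_set_dimension q' H by blast
    hence "q' = q" using cantor_ratio_unique[of q' q t] q'(1) q(1) qt by simp
    thus "bilipschitz_embeds E F L" using L(2) H q' by blast
  qed (rule L(1))
next
  case False
  show ?thesis
  proof (intro exI[of _ 1] conjI allI impI)
    fix E F \<kappa> \<mu> assume H: "(\<exists>q>2. F = cantor_set q) \<and> ahlfors_regular E s \<kappa> c1 C1
      \<and> ahlfors_regular F t \<mu> c2 C2 \<and> diameter E = dE"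
    then obtain q where q: "2 < q" "F = cantor_set q" by blast
    have "bounded E" using H compact_imp_bounded by (auto simp: ahlfors_regular_def)
    moreover have "diameter E \<le> 0" using False H q by auto
    moreover have "0 \<in> F"
      using q cantor_point_in_cantor_set[of q "\<lambda>_. False"] cantor_point_const(1)[of q] by simp
    ultimately show "bilipschitz_embeds E F 1"
      by (rule bilipschitz_embeds_diameter_nonpos)
  qed simp
qed

theorem mainTheorem4:
  fixes s t c1 C1 c2 C2 dE dF :: real
  assumes "s < t" and "0 < dF"
  shows "\<exists>L\<ge>1. \<forall>(E::real set) (F::real set) (\<kappa>::real measure) (\<mu>::real measure).
           ahlfors_regular E s \<kappa> c1 C1 \<and> ahlfors_regular F t \<mu> c2 C2 \<and>
           diameter E = dE \<and> diameter F = dF \<and>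
           ((\<exists>p>2. E = cantor_set p) \<or> (\<exists>p>2. F = cantor_set p))
           \<longrightarrow> (\<exists>\<phi>::real \<Rightarrow> real. \<phi> ` E \<subseteq> F \<and> strict_mono_on E \<phi> \<and>
                 (\<forall>x\<in>E. \<forall>y\<in>E. \<bar>x - y\<bar> \<le> L * \<bar>\<phi> x - \<phi> y\<bar> \<and>
                                 \<bar>\<phi> x - \<phi> y\<bar> \<le> L * \<bar>x - y\<bar>))"
proof -
  obtain L1 L2 where L: "1 \<le> L1" "1 \<le> L2"
    and domain: "\<And>E F \<kappa> \<mu>. (\<exists>p>2. E = cantor_set p) \<Longrightarrow> ahlfors_regular E s \<kappa> c1 C1
      \<Longrightarrow> ahlfors_regular F t \<mu> c2 C2 \<Longrightarrow> diameter F = dF \<Longrightarrow> bilipschitz_embeds E F L1"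
    and target: "\<And>E F \<kappa> \<mu>. (\<exists>q>2. F = cantor_set q) \<Longrightarrow> ahlfors_regular E s \<kappa> c1 C1
      \<Longrightarrow> ahlfors_regular F t \<mu> c2 C2 \<Longrightarrow> diameter E = dE \<Longrightarrow> bilipschitz_embeds E F L2"
    using cantor_domain_embedding[OF assms] cantor_target_embedding[OF assms(1)] by metis
  have combined: "bilipschitz_embeds E F (max L1 L2)"
    if "ahlfors_regular E s \<kappa> c1 C1 \<and> ahlfors_regular F t \<mu> c2 C2 \<and> diameter E = dE \<and> diameter F = dF
      \<and> ((\<exists>p>2. E = cantor_set p) \<or> (\<exists>p>2. F = cantor_set p))" for E F \<kappa> \<mu>
    using that domain[of E \<kappa> F \<mu>] target[of F E \<kappa> \<mu>]
      bilipschitz_embeds_mono[of E F L1] bilipschitz_embeds_mono[of E F L2] by fastforce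
  show ?thesis
  proof (intro exI[of _ "max L1 L2"] conjI allI impI)
    fix E F \<kappa> \<mu>
    assume "ahlfors_regular E s \<kappa> c1 C1 \<and> ahlfors_regular F t \<mu> c2 C2 \<and> diameter E = dE \<and> diameter F = dF
      \<and> ((\<exists>p>2. E = cantor_set p) \<or> (\<exists>p>2. F = cantor_set p))"
    from combined[OF this] show "\<exists>\<phi>. \<phi> ` E \<subseteq> F \<and> strict_mono_on E \<phi> \<and>
        (\<forall>x\<in>E. \<forall>y\<in>E. \<bar>x - y\<bar> \<le> max L1 L2 * \<bar>\<phi> x - \<phi> y\<bar> \<and> \<bar>\<phi> x - \<phi> y\<bar> \<le> max L1 L2 * \<bar>x - y\<bar>)"
      unfolding bilipschitz_embeds_def bilipschitz_on_def .
  qed (use L(1) in simp)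
qed

end
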